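(* In the MSBM setting of the context, assume $\alpha_n\log(n)\le1/L$ and \[n\alpha_n>\max\Big(\frac{4Lc''}{\pi_m^2D^2},\ \frac{2}{L\pi_m}\Big).\] Then \[\mathbb P\Big(\mathrm{err}(\hat G,G)>\exp\big(-\tfrac{c'S^2}{2}\big)\Big)\le\frac{c}{n^2}+2K\exp\Big(-\frac{n\pi_m^2}{2A_1+4A_2\pi_m}\Big),\] where $S^2=\frac{n\alpha_n\pi_mD^2}{L}$.
   Context: MSBM: $K\ge2$ fixed; $(C_i)_{i\in[n]}$ is a positive recurrent Markov chain on $[K]$ with transition matrix $P$, stationary distribution $\pi$, $C_1\sim\pi$. $Q_0\in[0,1]^{K\times K}$ symmetric, independent of $n$; $\alpha_n\in(0,1)$; $Q=\alpha_nQ_0$; given $(C_i)$, $X_{i,j}\sim\mathrm{Ber}(Q_{C_i,C_j})$ independently for $i<j$. $L:=\max_{k,l}(Q_0)_{k,l}$, $\pi_m:=\min_c\pi(c)$, $D^2:=\min_{l\neq k}\|(Q_0)_{:,k}-(Q_0)_{:,l}\|_2^2>0$. $G_k=\{i:C_i=k\}$; $\mathrm{err}(\hat G,G)=\min_{\sigma\in\mathcal S_K}\frac1{2n}\sum_k|\hat G_k\Delta G_{\sigma(k)}|$. $\hat G$ is the output of the clustering algorithm: $\hat\beta=\min(\frac{K^3}{n}e^{2nd_X},1)$ ($d_X$ edge density), $\hat B\in\arg\max\langle XX^\top,B\rangle$ over symmetric $B$ with $\mathrm{Tr}B=K$, $B\mathbf 1=\mathbf 1$, $0\le B_{i,j}\le\hat\beta$,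 then a $7$-approximate $K$-medoids (Charikar et al.) on the rows of $\hat B$. Constants $c,c',c''>0$ are the numerical constants of the Giraud–Verzelen guarantee for this algorithm: for an SBM with fixed communities of sizes $m_k$, smallest size $m$, connectivity $\alpha_nQ_0$ with $\|Q_0\|_\infty\le L$, setting $\Delta^2=\min_{k\ne j}\sum_l m_l(Q_{k,l}-Q_{j,l})^2$ and $s^2=\Delta^2/(\alpha_nL)$, if $1/m\le\alpha_nL\le1/\log n$ and $s^2\ge c''n/m$, then with probability at least $1-c/n^2$, $\mathrm{err}(\hat G,G)\le e^{-c's^2}$. Spectral gap: for the chain $(C_i)$ with Markov operator $P$ on $L^2(\pi)$ and adjoint $P^*$, let $\lambda_+$ be the supremum of the spectrum of $(P+P^* )/2$ acting on $L^2_0(\pi)=\{h:\pi(h)=0\}$ (so $1-\lambda_+$ is the right $L^2$-spectral gap). $A_1:=\frac{1+\max(\lambda_+,0)}{1-\max(\lambda_+,0)}$, $A_2:=\frac13\mathbf 1_{\lambda_+\le0}+\frac{5}{1-\lambda_+}\mathbf 1_{\lambda_+>0}$. *)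

theory Defs
  imports "HOL-Analysis.Analysis" "HOL-Combinatorics.Permutations"
begin

text \<open>Communities are labelled 0,...,K-1 and nodes 0,...,n-1.
  A community assignment is an element of labelings n K; a graph is a set of
  unordered edges, encoded as pairs (i,j) with i < j < n.\<close>

definition labelings :: "nat \<Rightarrow> nat \<Rightarrow> (nat \<Rightarrow> nat) set" where
  "labelings n K = {..<n} \<rightarrow>\<^sub>E {..<K}"

definition pairs :: "nat \<Rightarrow> (nat \<times> nat) set" where
  "pairs n = {(i, j). i < j \<and> j < n}"

definition graphs :: "nat \<Rightarrow> (nat \<times> nat) set set" where
  "graphs n = Pow (pairs n)"

definition markov_weight ::
  "(nat \<Rightarrow> nat \<Rightarrow> real) \<Rightarrow> (nat \<Rightarrow> real) \<Rightarrow> nat \<Rightarrow> (nat \<Rightarrow> nat) \<Rightarrow> real" where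
  "markov_weight P \<pi> n C =
     (if n = 0 then 1 else \<pi> (C 0) * (\<Prod>i<n - 1. P (C i) (C (Suc i))))"

definition sbm_weight ::
  "(nat \<Rightarrow> nat \<Rightarrow> real) \<Rightarrow> nat \<Rightarrow> (nat \<Rightarrow> nat) \<Rightarrow> (nat \<times> nat) set \<Rightarrow> real" where
  "sbm_weight Q n C E =
     (\<Prod>(i, j)\<in>pairs n. if (i, j) \<in> E then Q (C i) (C j) else 1 - Q (C i) (C j))"

definition sbm_prob ::
  "(nat \<Rightarrow> nat \<Rightarrow> real) \<Rightarrow> nat \<Rightarrow> (nat \<Rightarrow> nat) \<Rightarrow> ((nat \<times> nat) set \<Rightarrow> bool) \<Rightarrow> real" where
  "sbm_prob Q n C A = (\<Sum>E\<in>{E \<in> graphs n. A E}. sbm_weight Q n C E)"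

definition msbm_prob ::
  "nat \<Rightarrow> (nat \<Rightarrow> nat \<Rightarrow> real) \<Rightarrow> (nat \<Rightarrow> real) \<Rightarrow> (nat \<Rightarrow> nat \<Rightarrow> real) \<Rightarrow> nat
    \<Rightarrow> ((nat \<Rightarrow> nat) \<Rightarrow> (nat \<times> nat) set \<Rightarrow> bool) \<Rightarrow> real" where
  "msbm_prob K P \<pi> Q n A =
     (\<Sum>C\<in>labelings n K. markov_weight P \<pi> n C * sbm_prob Q n C (A C))"

definition community :: "nat \<Rightarrow> (nat \<Rightarrow> nat) \<Rightarrow> nat \<Rightarrow> nat set" where
  "community n C k = {i. i < n \<and> C i = k}"

definition err :: "nat \<Rightarrow> nat \<Rightarrow> (nat \<Rightarrow> nat) \<Rightarrow> (nat \<Rightarrow> nat) \<Rightarrow> real" where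
  "err n K Gh G = Min ((\<lambda>\<sigma>. (\<Sum>k<K. real (card
        ((community n Gh k - community n G (\<sigma> k)) \<union> (community n G (\<sigma> k) - community n Gh k))))
        / (2 * real n)) ` {\<sigma>. \<sigma> permutes {..<K}})"

text \<open>Markov operator P and its adjoint P* on L^2(pi) over the state space {0..<K}.\<close>
definition Pop :: "nat \<Rightarrow> (nat \<Rightarrow> nat \<Rightarrow> real) \<Rightarrow> (nat \<Rightarrow> real) \<Rightarrow> nat \<Rightarrow> real" where
  "Pop K P f i = (\<Sum>j<K. P i j * f j)"

definition Padj ::
  "nat \<Rightarrow> (nat \<Rightarrow> nat \<Rightarrow> real) \<Rightarrow> (nat \<Rightarrow> real) \<Rightarrow> (nat \<Rightarrow> real) \<Rightarrow> nat \<Rightarrow> real" where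
  "Padj K P \<pi> f i = (\<Sum>j<K. \<pi> j * P j i * f j / \<pi> i)"

text \<open>lambda_+ : supremum of the spectrum of (P + P*)/2 acting on
  L^2_0(pi) = {h : pi(h) = 0}. The space is finite dimensional, so the spectrum
  consists of the eigenvalues.\<close>
definition lambda_plus :: "nat \<Rightarrow> (nat \<Rightarrow> nat \<Rightarrow> real) \<Rightarrow> (nat \<Rightarrow> real) \<Rightarrow> real" where
  "lambda_plus K P \<pi> = Sup {l. \<exists>h. (\<exists>i<K. h i \<noteq> 0) \<and> (\<Sum>i<K. \<pi> i * h i) = 0 \<and>
        (\<forall>i<K. (Pop K P h i + Padj K P \<pi> h i) / 2 = l * h i)}"

definition A1 :: "real \<Rightarrow> real" where
  "A1 lam = (1 + max lam 0) / (1 - max lam 0)"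

definition A2 :: "real \<Rightarrow> real" where
  "A2 lam = (if lam \<le> 0 then 1 / 3 else 5 / (1 - lam))"

fun mpow :: "nat \<Rightarrow> (nat \<Rightarrow> nat \<Rightarrow> real) \<Rightarrow> nat \<Rightarrow> nat \<Rightarrow> nat \<Rightarrow> real" where
  "mpow K P 0 i j = (if i = j then 1 else 0)"
| "mpow K P (Suc m) i j = (\<Sum>l<K. P i l * mpow K P m l j)"

definition Lmax :: "nat \<Rightarrow> (nat \<Rightarrow> nat \<Rightarrow> real) \<Rightarrow> real" where
  "Lmax K Q0 = Max {Q0 k l | k l. k < K \<and> l < K}"

definition pi_min :: "nat \<Rightarrow> (nat \<Rightarrow> real) \<Rightarrow> real" where
  "pi_min K \<pi> = Min (\<pi> ` {..<K})"

definition Dsq :: "nat \<Rightarrow> (nat \<Rightarrow> nat \<Rightarrow> real) \<Rightarrow> real" where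
  "Dsq K Q0 = Min {(\<Sum>r<K. (Q0 r k - Q0 r l)^2) | k l. k < K \<and> l < K \<and> l \<noteq> k}"

text \<open>The Giraud--Verzelen guarantee with constants c, c', c'' for the clustering
  map alg (graph to labels), for the SBM with n nodes, K fixed communities given
  by any labelling C0, and connectivity alpha * Q0 (with L = max Q0).\<close>
definition GV_guarantee ::
  "((nat \<times> nat) set \<Rightarrow> nat \<Rightarrow> nat) \<Rightarrow> nat \<Rightarrow> nat \<Rightarrow> real \<Rightarrow> (nat \<Rightarrow> nat \<Rightarrow> real) \<Rightarrow> real
    \<Rightarrow> real \<Rightarrow> real \<Rightarrow> real \<Rightarrow> bool" where
  "GV_guarantee alg n K \<alpha> Q0 L c c' c'' \<longleftrightarrow>
    (\<forall>C0\<in>labelings n K.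
      let msz = (\<lambda>k. real (card (community n C0 k)));
          m = Min (msz ` {..<K});
          Q = (\<lambda>k l. \<alpha> * Q0 k l);
          Delta2 = Min {(\<Sum>l<K. msz l * (Q k l - Q j l)^2) | k j. k < K \<and> j < K \<and> k \<noteq> j};
          s2 = Delta2 / (\<alpha> * L)
      in m > 0 \<and> 1 / m \<le> \<alpha> * L \<and> \<alpha> * L \<le> 1 / ln (real n) \<and> s2 \<ge> c'' * real n / m \<longrightarrow>
         sbm_prob Q n C0 (\<lambda>E. err n K (alg E) C0 > exp (- c' * s2)) \<le> c / (real n)^2)"

end

theory Submission
  imports Defs
begin

text \<open>Given the communities, the Giraud--Verzelen guarantee applies as soon as every community
  has at least \<open>n \<pi>\<^sub>m / 2\<close> members: the assumptions on \<open>n \<alpha>\<^sub>n\<close> then yield its hypotheses,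
  and its exponent \<open>s\<^sup>2\<close> is at least \<open>S\<^sup>2 / 2\<close>. What remains is a Chernoff bound for the
  occupation time of each state \<open>k\<close> by the chain. Tilting by \<open>g = e\<^sup>-\<^sup>\<theta>\<close> at \<open>k\<close>,
  \<open>E \<Prod>\<^sub>i g(C\<^sub>i)\<close> is a quadratic form of a power of the operator \<open>\<surd>g P \<surd>g\<close> (up to adjoints).
  Its own quadratic form is controlled by the spectral gap,
  \<open>\<langle>u, P u\<rangle>\<^sub>\<pi> \<le> l \<parallel>u\<parallel>\<^sup>2 + (1 - l) \<pi>(u)\<^sup>2\<close> with \<open>l = max \<lambda>\<^sub>+ 0\<close>, and since \<open>P\<close> need not be
  reversible, Berger's power inequality \<open>w(T\<^sup>m) \<le> w(T)\<^sup>m\<close> for the numerical radius carries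
  this to powers.\<close>

section \<open>Berger's power inequality for nonnegative matrices\<close>

definition mat_act :: "nat \<Rightarrow> (nat \<Rightarrow> nat \<Rightarrow> real) \<Rightarrow> (nat \<Rightarrow> 'a::real_algebra_1) \<Rightarrow> nat \<Rightarrow> 'a" where
  "mat_act K t x i = (\<Sum>j<K. of_real (t i j) * x j)"

definition wdot :: "nat \<Rightarrow> (nat \<Rightarrow> real) \<Rightarrow> (nat \<Rightarrow> real) \<Rightarrow> (nat \<Rightarrow> real) \<Rightarrow> real" where
  "wdot K w u v = (\<Sum>i<K. w i * u i * v i)"

definition cwdot :: "nat \<Rightarrow> (nat \<Rightarrow> real) \<Rightarrow> (nat \<Rightarrow> complex) \<Rightarrow> (nat \<Rightarrow> complex) \<Rightarrow> complex" where
  "cwdot K w x y = (\<Sum>i<K. of_real (w i) * x i * cnj (y i))"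

lemma mat_act_sum:
  "mat_act K t (\<lambda>i. \<Sum>d\<in>A. c d * v d i) = (\<lambda>i. \<Sum>d\<in>A. c d * mat_act K t (v d) i)"
  for c :: "'b \<Rightarrow> 'a::{real_algebra_1,comm_ring_1}" and t :: "nat \<Rightarrow> nat \<Rightarrow> real"
  unfolding mat_act_def
  by (simp add: sum_distrib_left mult_ac sum.swap[of _ A])

lemma funpow_mat_act_of_real:
  "(mat_act K t ^^ m) (\<lambda>i. complex_of_real (x i)) = (\<lambda>i. of_real ((mat_act K t ^^ m) x i))"
  by (induction m) (auto simp: mat_act_def)

lemma cwdot_self: "cwdot K w x x = of_real (\<Sum>i<K. w i * (cmod (x i))\<^sup>2)"
  unfolding cwdot_def by (simp add: mult.assoc complex_mult_cnj cmod_def)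

lemma cwdot_diff_left: "cwdot K w (\<lambda>i. x i - y i) z = cwdot K w x z - cwdot K w y z"
  unfolding cwdot_def by (simp add: algebra_simps sum_subtractf)

lemma cwdot_sum_right: "cwdot K w z (\<lambda>i. \<Sum>k\<in>A. y k i) = (\<Sum>k\<in>A. cwdot K w z (y k))"
  unfolding cwdot_def by (simp add: sum_distrib_left sum.swap[of _ A])

lemma cwdot_mult_left: "cwdot K w (\<lambda>i. c * x i) z = c * cwdot K w x z"
  unfolding cwdot_def by (simp add: sum_distrib_left mult_ac)

lemma cwdot_of_real_right: "cwdot K w z (\<lambda>i. of_real r * x i) = of_real r * cwdot K w z x"
  unfolding cwdot_def by (simp add: sum_distrib_left mult_ac)

text \<open>The numerical radius of a nonnegative matrix is attained on nonnegative vectors, since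
  \<open>|\<langle>t x, x\<rangle>| \<le> \<langle>t |x|, |x|\<rangle>\<close>.\<close>
lemma cmod_cwdot_mat_act_le:
  assumes w: "\<forall>i<K. w i > 0" and t: "\<forall>i<K. \<forall>j<K. t i j \<ge> 0"
    and H: "\<forall>y. (\<forall>i<K. y i \<ge> 0) \<longrightarrow> wdot K w y (mat_act K t y) \<le> b * wdot K w y y"
  shows "cmod (cwdot K w (mat_act K t x) x) \<le> b * (\<Sum>i<K. w i * (cmod (x i))\<^sup>2)"
proof -
  have "cmod (cwdot K w (mat_act K t x) x) \<le> (\<Sum>i<K. cmod (of_real (w i) * mat_act K t x i * cnj (x i)))"
    unfolding cwdot_def by (rule norm_sum)
  also have "\<dots> \<le> (\<Sum>i<K. w i * cmod (x i) * mat_act K t (\<lambda>j. cmod (x j)) i)"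
  proof (rule sum_mono)
    fix i assume i: "i \<in> {..<K}"
    have "cmod (mat_act K t x i) \<le> (\<Sum>j<K. cmod (of_real (t i j) * x j))"
      unfolding mat_act_def by (rule norm_sum)
    also have "\<dots> = mat_act K t (\<lambda>j. cmod (x j)) i"
      using t i by (auto intro!: sum.cong simp: norm_mult mat_act_def)
    finally have "cmod (mat_act K t x i) \<le> mat_act K t (\<lambda>j. cmod (x j)) i" .
    moreover have "cmod (of_real (w i) * mat_act K t x i * cnj (x i))
        = w i * cmod (x i) * cmod (mat_act K t x i)"
      using w i by (simp add: norm_mult abs_of_pos)
    ultimately show "cmod (of_real (w i) * mat_act K t x i * cnj (x i))
        \<le> w i * cmod (x i) * mat_act K t (\<lambda>j. cmod (x j)) i"
      using w i by (simp add: mult_left_mono)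
  qed
  also have "\<dots> \<le> b * (\<Sum>i<K. w i * (cmod (x i))\<^sup>2)"
    using H[rule_format, of "\<lambda>i. cmod (x i)"] by (simp add: wdot_def power2_eq_square mult.assoc)
  finally show ?thesis .
qed

lemma sum_cis_root_powers:
  fixes m d :: nat assumes "d < m"
  shows "(\<Sum>k<m. cis (2*pi/m) ^ (k*d)) = (if d = 0 then of_nat m else 0)"
proof (cases "d = 0")
  case False
  have m: "m > 0" using assms by simp
  have ne: "cis (2*pi/m) ^ d \<noteq> 1"
  proof
    assume "cis (2*pi/m) ^ d = 1"
    moreover have "cis (2*pi/m) ^ d = cis (2*pi*real d/real m)"
      unfolding Complex.DeMoivre by (simp add: field_simps)
    ultimately have "cis (2*pi*real d/real m) = cis (2*pi*real 0/real m)"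
      by simp
    moreover have "inj_on (\<lambda>k. cis (2 * pi * real k / real m)) {..<m}"
      using Complex.bij_betw_roots_unity[OF m] by (simp add: bij_betw_def)
    ultimately have "d = 0"
      using assms inj_onD[of "\<lambda>k. cis (2 * pi * real k / real m)" "{..<m}" d 0] by simp
    then show False using False by simp
  qed
  have "(cis (2*pi/m) ^ d) ^ m = cis (2*pi*real d)"
    using m unfolding power_mult[symmetric] Complex.DeMoivre by (simp add: field_simps)
  also have "\<dots> = 1" using cis_multiple_2pi[of "real d"] by simp
  finally have "(\<Sum>k<m. (cis (2*pi/m) ^ d) ^ k) = 0" using ne by (simp add: sum_gp_strict)
  then show ?thesis using False by (simp add: power_mult mult.commute[of _ d])
qed simp

definition pearcy_vector ::
  "nat \<Rightarrow> (nat \<Rightarrow> nat \<Rightarrow> real) \<Rightarrow> real \<Rightarrow> nat \<Rightarrow> (nat \<Rightarrow> complex) \<Rightarrow> nat \<Rightarrow> nat \<Rightarrow> complex"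
  where "pearcy_vector K t b m x k =
    (\<lambda>i. \<Sum>d<m. (cis (2*pi/m) ^ (k*d) * of_real (b^(m-1-d))) * (mat_act K t ^^ d) x i)"

lemma pearcy_vector_telescope:
  fixes b :: real and K k :: nat and t :: "nat \<Rightarrow> nat \<Rightarrow> real" and x :: "nat \<Rightarrow> complex"
  assumes m: "m > 0"
  defines "X \<equiv> pearcy_vector K t b m x k" and "T \<equiv> mat_act K t"
  shows "(\<lambda>i. of_real b * X i - cis (2*pi/m) ^ k * T X i) = (\<lambda>i. of_real (b^m) * x i - (T ^^ m) x i)"
proof
  fix i
  define a where "a d = cis (2*pi/m) ^ (k*d) * of_real (b^(m-d)) * (T ^^ d) x i" for d
  have "of_real b * X i = (\<Sum>d<m. a d)"
    unfolding X_def pearcy_vector_def a_def T_def sum_distrib_left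
  proof (rule sum.cong[OF refl])
    fix d assume "d \<in> {..<m}"
    then have "m - d = Suc (m - 1 - d)" by simp
    then have pow: "b * b^(m-1-d) = b^(m-d)" by simp
    show "of_real b * (cis (2*pi/m) ^ (k * d) * of_real (b ^ (m - 1 - d)) * (mat_act K t ^^ d) x i) =
        cis (2*pi/m) ^ (k * d) * of_real (b ^ (m - d)) * (mat_act K t ^^ d) x i"
      by (simp add: pow[symmetric] mult_ac)
  qed
  moreover have "cis (2*pi/m) ^ k * T X i = (\<Sum>d<m. a (Suc d))"
    unfolding X_def pearcy_vector_def T_def mat_act_sum a_def sum_distrib_left
    by (rule sum.cong[OF refl]) (simp add: algebra_simps power_add)
  ultimately have "of_real b * X i - cis (2*pi/m) ^ k * T X i = (\<Sum>d<m. a d - a (Suc d))"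
    by (simp add: sum_subtractf)
  also have "\<dots> = a 0 - a m" by (rule sum_lessThan_telescope')
  also have "cis (2*pi/m) ^ (k*m) = 1"
    using m cis_multiple_2pi[of "real k"] unfolding power_mult[symmetric] Complex.DeMoivre
    by (simp add: field_simps)
  then have "a 0 - a m = of_real (b^m) * x i - (T ^^ m) x i"
    unfolding a_def by (simp add: mult.commute[of k])
  finally show "of_real b * X i - cis (2*pi/m) ^ k * T X i = of_real (b^m) * x i - (T ^^ m) x i" .
qed

lemma sum_pearcy_vectors:
  fixes b :: real assumes m: "m > 0"
  shows "(\<lambda>i. \<Sum>k<m. pearcy_vector K t b m x k i) = (\<lambda>i. of_real (real m * b^(m-1)) * x i)"
proof
  fix i
  have "(\<Sum>k<m. pearcy_vector K t b m x k i)
      = (\<Sum>d<m. (\<Sum>k<m. cis (2*pi/m) ^ (k*d)) * (of_real (b^(m-1-d)) * (mat_act K t ^^ d) x i))"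
    unfolding pearcy_vector_def by (subst sum.swap) (simp add: sum_distrib_right mult.assoc)
  also have "\<dots> = (\<Sum>d<m. if d = 0 then of_nat m * (of_real (b^(m-1)) * x i) else 0)"
    by (rule sum.cong[OF refl]) (auto simp: sum_cis_root_powers)
  finally show "(\<Sum>k<m. pearcy_vector K t b m x k i) = of_real (real m * b^(m-1)) * x i"
    using m by simp
qed

text \<open>Berger's power inequality \<open>w(T\<^sup>m) \<le> w(T)\<^sup>m\<close> for the numerical radius, in Pearcy's proof:
  writing \<open>z = b\<^sup>m x - T\<^sup>m x\<close>, the vectors \<open>X\<^sub>k\<close> express \<open>m b\<^sup>m\<^sup>-\<^sup>1 \<langle>z, x\<rangle>\<close> as
  \<open>\<Sum>\<^sub>k \<langle>b X\<^sub>k - \<omega>\<^sup>k T X\<^sub>k, X\<^sub>k\<rangle>\<close>, whose terms have nonnegative real part.\<close>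
lemma Re_cwdot_funpow_mat_act_le:
  assumes w: "\<forall>i<K. w i > 0" and t: "\<forall>i<K. \<forall>j<K. t i j \<ge> 0" and b: "b > 0"
    and H: "\<forall>y. (\<forall>i<K. y i \<ge> 0) \<longrightarrow> wdot K w y (mat_act K t y) \<le> b * wdot K w y y"
    and m: "m > 0"
  shows "Re (cwdot K w ((mat_act K t ^^ m) x) x) \<le> b^m * (\<Sum>i<K. w i * (cmod (x i))\<^sup>2)"
proof -
  define T :: "(nat \<Rightarrow> complex) \<Rightarrow> nat \<Rightarrow> complex" where "T = mat_act K t"
  define z where "z = (\<lambda>i. of_real (b^m) * x i - (T ^^ m) x i)"
  define \<omega> where "\<omega> = cis (2*pi/m)"
  define X where "X = pearcy_vector K t b m x"
  have "of_real (real m * b^(m-1)) * cwdot K w z x = cwdot K w z (\<lambda>i. \<Sum>k<m. X k i)"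
    unfolding X_def sum_pearcy_vectors[OF m] cwdot_of_real_right ..
  also have "\<dots> = (\<Sum>k<m. cwdot K w (\<lambda>i. of_real b * X k i - \<omega>^k * T (X k) i) (X k))"
    unfolding X_def \<omega>_def T_def z_def pearcy_vector_telescope[OF m] cwdot_sum_right ..
  also have "\<dots> = (\<Sum>k<m. of_real b * cwdot K w (X k) (X k) - \<omega>^k * cwdot K w (T (X k)) (X k))"
    by (simp add: cwdot_diff_left cwdot_mult_left)
  finally have eq: "of_real (real m * b^(m-1)) * cwdot K w z x = \<dots>" .
  have "0 \<le> Re (of_real b * cwdot K w (X k) (X k) - \<omega>^k * cwdot K w (T (X k)) (X k))" for k
  proof -
    have "Re (\<omega>^k * cwdot K w (T (X k)) (X k)) \<le> cmod (\<omega>^k * cwdot K w (T (X k)) (X k))"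
      by (rule complex_Re_le_cmod)
    also have "\<dots> = cmod (cwdot K w (T (X k)) (X k))"
      unfolding \<omega>_def by (simp add: norm_mult norm_power)
    also have "\<dots> \<le> b * (\<Sum>i<K. w i * (cmod (X k i))\<^sup>2)"
      unfolding T_def by (rule cmod_cwdot_mat_act_le[OF w t H])
    finally show ?thesis by (simp add: cwdot_self)
  qed
  then have "0 \<le> Re (of_real (real m * b^(m-1)) * cwdot K w z x)"
    unfolding eq Re_sum by (rule sum_nonneg)
  moreover have "real m * b^(m-1) > 0" using m b by simp
  ultimately have "0 \<le> Re (cwdot K w z x)"
    by (simp add: zero_le_mult_iff)
  moreover have "cwdot K w z x = of_real (b^m) * cwdot K w x x - cwdot K w ((T ^^ m) x) x"
    unfolding z_def cwdot_diff_left cwdot_mult_left ..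
  ultimately show ?thesis unfolding T_def by (simp add: cwdot_self)
qed

lemma wdot_funpow_mat_act_le:
  assumes w: "\<forall>i<K. w i > 0" and t: "\<forall>i<K. \<forall>j<K. t i j \<ge> 0" and b: "b > 0"
    and H: "\<forall>y. (\<forall>i<K. y i \<ge> 0) \<longrightarrow> wdot K w y (mat_act K t y) \<le> b * wdot K w y y"
  shows "wdot K w x ((mat_act K t ^^ m) x) \<le> b^m * wdot K w x x"
proof (cases "m = 0")
  case False
  have "Re (cwdot K w ((mat_act K t ^^ m) (\<lambda>i. of_real (x i))) (\<lambda>i. of_real (x i))) \<le>
      b^m * (\<Sum>i<K. w i * (cmod (of_real (x i)))\<^sup>2)"
    using False by (intro Re_cwdot_funpow_mat_act_le[OF w t b H]) simp
  then show ?thesis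
    unfolding funpow_mat_act_of_real cwdot_def wdot_def
    by (simp add: Re_sum mult_ac power2_eq_square)
qed simp

section \<open>The spectral gap bound for the quadratic form of \<open>P\<close>\<close>

definition wmean :: "nat \<Rightarrow> (nat \<Rightarrow> real) \<Rightarrow> (nat \<Rightarrow> real) \<Rightarrow> real" where
  "wmean K w u = (\<Sum>i<K. w i * u i)"

lemma sum_mult_indicator:
  fixes f g :: "nat \<Rightarrow> real" assumes "i < K"
  shows "(\<Sum>j<K. f j * (if j = i then 1 else 0) * g j) = f i * g i"
proof -
  have "(\<Sum>j<K. f j * (if j = i then 1 else 0) * g j) = (\<Sum>j<K. if j = i then f i * g i else 0)"
    by (rule sum.cong) auto
  then show ?thesis using assms by simp
qed

locale stationary_chain =
  fixes K :: nat and P :: "nat \<Rightarrow> nat \<Rightarrow> real" and \<pi> :: "nat \<Rightarrow> real"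
  assumes P_nonneg: "\<forall>i<K. \<forall>j<K. P i j \<ge> 0"
    and P_stoch: "\<forall>i<K. (\<Sum>j<K. P i j) = 1"
    and pi_pos: "\<forall>i<K. \<pi> i > 0"
    and pi_sum: "(\<Sum>i<K. \<pi> i) = 1"
    and pi_stat: "\<forall>j<K. (\<Sum>i<K. \<pi> i * P i j) = \<pi> j"
begin

abbreviation norm2 :: "(nat \<Rightarrow> real) \<Rightarrow> real" where
  "norm2 u \<equiv> wdot K \<pi> u u"

abbreviation lag_cov :: "(nat \<Rightarrow> real) \<Rightarrow> real" where
  "lag_cov u \<equiv> wdot K \<pi> u (Pop K P u) - (wmean K \<pi> u)\<^sup>2"

lemma pi_le_one: "i < K \<Longrightarrow> \<pi> i \<le> 1"
  using member_le_sum[of i "{..<K}" \<pi>] pi_pos pi_sum by (simp add: less_imp_le)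

lemma wmean_Pop: "wmean K \<pi> (Pop K P u) = wmean K \<pi> u"
proof -
  have "wmean K \<pi> (Pop K P u) = (\<Sum>j<K. (\<Sum>i<K. \<pi> i * P i j) * u j)"
    unfolding wmean_def Pop_def sum_distrib_left sum_distrib_right
    by (subst sum.swap) (simp add: mult_ac)
  then show ?thesis unfolding wmean_def using pi_stat by simp
qed

lemma wmean_Padj: "wmean K \<pi> (Padj K P \<pi> u) = wmean K \<pi> u"
proof -
  have "wmean K \<pi> (Padj K P \<pi> u) = (\<Sum>i<K. \<Sum>j<K. \<pi> j * P j i * u j)"
    unfolding wmean_def Padj_def using pi_pos by (auto simp: sum_distrib_left intro!: sum.cong)
  also have "\<dots> = (\<Sum>j<K. \<pi> j * u j * (\<Sum>i<K. P j i))"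
    by (subst sum.swap) (simp add: sum_distrib_left mult_ac)
  finally show ?thesis unfolding wmean_def using P_stoch by simp
qed

lemma wdot_Padj: "wdot K \<pi> h (Padj K P \<pi> u) = wdot K \<pi> (Pop K P h) u"
proof -
  have "wdot K \<pi> h (Padj K P \<pi> u) = (\<Sum>i<K. \<Sum>j<K. \<pi> j * P j i * u j * h i)"
    unfolding wdot_def Padj_def using pi_pos
    by (auto simp: sum_distrib_left mult_ac intro!: sum.cong)
  also have "\<dots> = wdot K \<pi> (Pop K P h) u"
    unfolding wdot_def Pop_def
    by (subst sum.swap) (simp add: sum_distrib_left sum_distrib_right mult_ac)
  finally show ?thesis .
qed

lemma norm2_nonneg: "norm2 u \<ge> 0"
  unfolding wdot_def using pi_pos by (auto intro!: sum_nonneg simp: mult.assoc)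

lemma norm2_pos: assumes "i < K" "u i \<noteq> 0" shows "norm2 u > 0"
proof -
  have "0 < u i * u i" using assms(2) not_real_square_gt_zero by blast
  then have "0 < \<pi> i * u i * u i" using assms pi_pos by (simp add: mult.assoc)
  also have "\<dots> \<le> norm2 u" unfolding wdot_def using assms pi_pos
    by (intro member_le_sum) (auto simp: mult.assoc)
  finally show ?thesis .
qed

lemma norm2_eq_0_iff: "norm2 u = 0 \<longleftrightarrow> (\<forall>i<K. u i = 0)"
proof
  show "norm2 u = 0 \<Longrightarrow> \<forall>i<K. u i = 0" using norm2_pos[of _ u] by force
qed (simp add: wdot_def)

lemma wdot_Pop_le_norm2: "wdot K \<pi> h (Pop K P h) \<le> norm2 h"
proof -
  have "wdot K \<pi> h (Pop K P h) = (\<Sum>i<K. \<Sum>j<K. \<pi> i * P i j * (h i * h j))"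
    unfolding wdot_def Pop_def by (simp add: sum_distrib_left mult_ac)
  also have "\<dots> \<le> (\<Sum>i<K. \<Sum>j<K. \<pi> i * P i j * (((h i)\<^sup>2 + (h j)\<^sup>2)/2))"
  proof (intro sum_mono mult_left_mono)
    fix i j assume "i \<in> {..<K}" "j \<in> {..<K}"
    then show "0 \<le> \<pi> i * P i j" using pi_pos P_nonneg by (simp add: less_imp_le)
    show "h i * h j \<le> ((h i)\<^sup>2 + (h j)\<^sup>2)/2"
      using sum_squares_bound[of "h i" "h j"] by (simp add: power2_eq_square)
  qed
  also have "\<dots> = (\<Sum>i<K. \<Sum>j<K. \<pi> i * P i j * (h i)\<^sup>2/2) + (\<Sum>i<K. \<Sum>j<K. \<pi> i * P i j * (h j)\<^sup>2/2)"
    by (simp add: sum.distrib[symmetric] add_divide_distrib distrib_left)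
  also have "(\<Sum>i<K. \<Sum>j<K. \<pi> i * P i j * (h j)\<^sup>2/2) = (\<Sum>j<K. \<Sum>i<K. \<pi> i * P i j * (h j)\<^sup>2/2)"
    by (rule sum.swap)
  also have "(\<Sum>i<K. \<Sum>j<K. \<pi> i * P i j * (h i)\<^sup>2/2) + (\<Sum>j<K. \<Sum>i<K. \<pi> i * P i j * (h j)\<^sup>2/2)
      = (\<Sum>i<K. \<pi> i * (h i)\<^sup>2 * (\<Sum>j<K. P i j))/2 + (\<Sum>j<K. (\<Sum>i<K. \<pi> i * P i j) * (h j)\<^sup>2)/2"
    by (simp add: sum_distrib_left sum_distrib_right sum_divide_distrib mult_ac)
  also have "\<dots> = norm2 h"
    using P_stoch pi_stat unfolding wdot_def by (simp add: power2_eq_square mult.assoc)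
  finally show ?thesis .
qed

lemma lag_cov_cong:
  assumes "\<forall>i<K. u i = v i" shows "lag_cov u = lag_cov v" "norm2 u = norm2 v"
proof -
  have "Pop K P u i = Pop K P v i" for i unfolding Pop_def using assms by simp
  then show "lag_cov u = lag_cov v" "norm2 u = norm2 v"
    unfolding wdot_def wmean_def using assms by simp_all
qed

lemma lag_cov_scale:
  "lag_cov (\<lambda>i. c * u i) = c\<^sup>2 * lag_cov u" "norm2 (\<lambda>i. c * u i) = c\<^sup>2 * norm2 u"
proof -
  have "Pop K P (\<lambda>i. c * u i) i = c * Pop K P u i" for i
    unfolding Pop_def by (simp add: sum_distrib_left mult_ac)
  then show "lag_cov (\<lambda>i. c * u i) = c\<^sup>2 * lag_cov u" "norm2 (\<lambda>i. c * u i) = c\<^sup>2 * norm2 u"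
    unfolding wdot_def wmean_def
    by (simp_all add: sum_distrib_left power2_eq_square algebra_simps)
qed

lemma lag_cov_add:
  "norm2 (\<lambda>i. u i + t * v i) = norm2 u + 2 * t * wdot K \<pi> u v + t\<^sup>2 * norm2 v"
  "lag_cov (\<lambda>i. u i + t * v i) = lag_cov u
     + t * (wdot K \<pi> u (Pop K P v) + wdot K \<pi> v (Pop K P u) - 2 * wmean K \<pi> u * wmean K \<pi> v)
     + t\<^sup>2 * lag_cov v"
proof -
  have Pop_add: "Pop K P (\<lambda>i. u i + t * v i) i = Pop K P u i + t * Pop K P v i" for i
    unfolding Pop_def by (simp add: sum_distrib_left sum.distrib algebra_simps)
  show "norm2 (\<lambda>i. u i + t * v i) = norm2 u + 2 * t * wdot K \<pi> u v + t\<^sup>2 * norm2 v"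
    unfolding wdot_def by (simp add: sum_distrib_left sum.distrib power2_eq_square algebra_simps)
  have "wmean K \<pi> (\<lambda>i. u i + t * v i) = wmean K \<pi> u + t * wmean K \<pi> v"
    unfolding wmean_def by (simp add: sum_distrib_left sum.distrib algebra_simps)
  moreover have "wdot K \<pi> (\<lambda>i. u i + t * v i) (Pop K P (\<lambda>i. u i + t * v i)) =
     wdot K \<pi> u (Pop K P u) + t * (wdot K \<pi> u (Pop K P v) + wdot K \<pi> v (Pop K P u))
     + t\<^sup>2 * wdot K \<pi> v (Pop K P v)"
    unfolding Pop_add wdot_def
    by (simp add: sum_distrib_left sum.distrib power2_eq_square algebra_simps)
  ultimately show "lag_cov (\<lambda>i. u i + t * v i) = lag_cov u
     + t * (wdot K \<pi> u (Pop K P v) + wdot K \<pi> v (Pop K P u) - 2 * wmean K \<pi> u * wmean K \<pi> v)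
     + t\<^sup>2 * lag_cov v"
    by (simp add: power2_eq_square algebra_simps)
qed

lemma compact_PiE_box: "compact (PiE UNIV (\<lambda>i::nat. if i < K then {-M..M} else {0::real}))"
proof -
  have "compactin (product_topology (\<lambda>i. euclidean) UNIV)
      (PiE UNIV (\<lambda>i::nat. if i < K then {-M..M} else {0::real}))"
    by (subst compactin_PiE) auto
  then show ?thesis by (simp add: euclidean_product_topology)
qed

lemma continuous_on_coordinate [continuous_intros]: "continuous_on S (\<lambda>x::nat \<Rightarrow> real. x i)"
  by (rule continuous_on_subset[OF continuous_on_product_coordinates]) auto

lemma abs_le_of_norm2_eq_1:
  assumes u: "norm2 u = 1" and i: "i < K" shows "\<bar>u i\<bar> \<le> 1 / \<pi> i"
proof -
  have "\<pi> i * u i * u i \<le> norm2 u" unfolding wdot_def using i pi_pos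
    by (intro member_le_sum) (auto simp: mult.assoc)
  then have "\<pi> i * (u i)\<^sup>2 \<le> 1" using u by (simp add: power2_eq_square mult.assoc)
  then have "(u i)\<^sup>2 \<le> 1 / \<pi> i" using pi_pos i by (simp add: field_simps)
  also have "\<dots> \<le> (1 / \<pi> i)\<^sup>2" using pi_le_one[OF i] pi_pos i
    by (simp add: power2_eq_square field_simps)
  finally show ?thesis using pi_pos i
    by (metis abs_le_square_iff abs_of_pos zero_less_divide_1_iff)
qed

text \<open>The unit sphere of \<open>L\<^sup>2(\<pi>)\<close>, realised inside \<open>nat \<Rightarrow> real\<close> by vectors vanishing
  from \<open>K\<close> on, is compact.\<close>
lemma lag_cov_attains_max:
  assumes K: "K > 0"
  obtains u where "\<forall>i\<ge>K. u i = 0" "norm2 u = 1"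
    "\<And>v. \<forall>i\<ge>K. v i = 0 \<Longrightarrow> norm2 v = 1 \<Longrightarrow> lag_cov v \<le> lag_cov u"
proof -
  define M where "M = (\<Sum>i<K. 1 / \<pi> i)"
  define B where "B = PiE UNIV (\<lambda>i::nat. if i < K then {-M..M} else {0::real})"
  define S where "S = {u. (\<forall>i\<ge>K. u i = 0) \<and> norm2 u = 1}"
  have coord_bound: "\<bar>u i\<bar> \<le> M" if "norm2 u = 1" "i < K" for u i
    using abs_le_of_norm2_eq_1[OF that] member_le_sum[of i "{..<K}" "\<lambda>i. 1 / \<pi> i"] that pi_pos
    unfolding M_def by (simp add: less_imp_le)
  have S_eq: "S = B \<inter> {u. norm2 u = 1}"
  proof (intro equalityI subsetI)
    fix u assume u: "u \<in> S"
    then have "u i \<in> (if i < K then {-M..M} else {0})" for i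
      using coord_bound[of u i] unfolding S_def by (cases "i < K") (auto simp: abs_le_iff)
    then have "u \<in> B" unfolding B_def by (intro PiE_I) simp_all
    moreover have "norm2 u = 1" using u unfolding S_def by simp
    ultimately show "u \<in> B \<inter> {u. norm2 u = 1}" by simp
  next
    fix u assume u: "u \<in> B \<inter> {u. norm2 u = 1}"
    then have "u i = 0" if "i \<ge> K" for i
      using PiE_mem[of u UNIV "\<lambda>i. if i < K then {-M..M} else {0}" i] u that
      unfolding B_def by simp
    then show "u \<in> S" using u unfolding S_def by auto
  qed
  have "compact S" unfolding S_eq B_def wdot_def
    by (intro compact_Int_closed compact_PiE_box closed_Collect_eq continuous_intros)
  moreover have "norm2 (\<lambda>i. if i = 0 then 1 / sqrt (\<pi> 0) else 0) = \<pi> 0 * (1 / sqrt (\<pi> 0))\<^sup>2"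
    unfolding wdot_def using K by (simp add: sum.delta if_distrib power2_eq_square cong: if_cong)
  then have "norm2 (\<lambda>i. if i = 0 then 1 / sqrt (\<pi> 0) else 0) = 1"
    using pi_pos K by (simp add: power_divide less_imp_le less_imp_neq[symmetric])
  then have "(\<lambda>i. if i = 0 then 1 / sqrt (\<pi> 0) else 0) \<in> S"
    using K unfolding S_def by simp
  moreover have "continuous_on S lag_cov"
    unfolding wdot_def wmean_def Pop_def by (intro continuous_intros)
  ultimately obtain u where "u \<in> S" "\<forall>v\<in>S. lag_cov v \<le> lag_cov u"
    using continuous_attains_sup[of S lag_cov] by blast
  then show ?thesis using that unfolding S_def by blast
qed

lemma lag_cov_le_max_ratio:
  assumes K: "K > 0"
  obtains u where "norm2 u = 1" "\<And>w. lag_cov w \<le> lag_cov u * norm2 w"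
proof -
  obtain u where u0: "\<forall>i\<ge>K. u i = 0" and u1: "norm2 u = 1"
    and umax: "\<And>v. \<forall>i\<ge>K. v i = 0 \<Longrightarrow> norm2 v = 1 \<Longrightarrow> lag_cov v \<le> lag_cov u"
    using lag_cov_attains_max[OF K] by blast
  have "lag_cov w \<le> lag_cov u * norm2 w" for w
  proof (cases "norm2 w = 0")
    case True
    then have "\<forall>i<K. w i = 0 * w i" using norm2_eq_0_iff by simp
    then have "lag_cov w = lag_cov (\<lambda>i. 0 * w i)" by (rule lag_cov_cong)
    then show ?thesis unfolding lag_cov_scale True by simp
  next
    case False
    then have pos: "norm2 w > 0" using norm2_nonneg[of w] by simp
    define c where "c = 1 / sqrt (norm2 w)"
    define w' where "w' = (\<lambda>i. if i < K then c * w i else 0)"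
    have c2: "c\<^sup>2 * norm2 w = 1" "c\<^sup>2 > 0" unfolding c_def using pos by (simp_all add: power_divide)
    have eq: "\<forall>i<K. w' i = c * w i" unfolding w'_def by simp
    have "norm2 w' = 1" using lag_cov_cong(2)[OF eq] lag_cov_scale(2) c2 by simp
    moreover have "\<forall>i\<ge>K. w' i = 0" unfolding w'_def by simp
    ultimately have "lag_cov w' \<le> lag_cov u" using umax by blast
    then have "c\<^sup>2 * lag_cov w \<le> lag_cov u * (c\<^sup>2 * norm2 w)"
      using lag_cov_cong(1)[OF eq] lag_cov_scale(1) c2 by simp
    then show ?thesis using c2(2) by (simp add: mult.left_commute[of "lag_cov u"])
  qed
  then show ?thesis using that u1 by blast
qed

lemma linear_le_quadratic_imp_zero:
  fixes A B :: real assumes "\<forall>t. t * A + t\<^sup>2 * B \<le> 0" shows "A = 0"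
proof -
  define C where "C = \<bar>B\<bar> + 1"
  have C: "C > 0" "C + B \<ge> 1" unfolding C_def by auto
  have "(A / C) * A + (A / C)\<^sup>2 * B = A\<^sup>2 * (C + B) / C\<^sup>2"
    using C by (simp add: field_simps power2_eq_square)
  moreover have "A\<^sup>2 * (C + B) / C\<^sup>2 \<ge> A\<^sup>2 / C\<^sup>2"
    using C by (intro divide_right_mono) (auto simp: mult_le_cancel_left1)
  ultimately have "A\<^sup>2 / C\<^sup>2 \<le> 0" using assms[rule_format, of "A / C"] by linarith
  then show ?thesis using C by (simp add: divide_le_0_iff)
qed

text \<open>First-order condition at a maximiser \<open>u\<close> of \<open>lag_cov / norm2\<close>, tested against the
  indicator of \<open>i\<close>.\<close>
lemma max_ratio_stationary:
  assumes max: "\<And>w. lag_cov w \<le> r * norm2 w" and u: "lag_cov u = r * norm2 u" and i: "i < K"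
  shows "Padj K P \<pi> u i + Pop K P u i = 2 * wmean K \<pi> u + 2 * r * u i"
proof -
  define d where "d = (\<lambda>j::nat. if j = i then 1 else (0::real))"
  have "\<forall>t. t * (wdot K \<pi> u (Pop K P d) + wdot K \<pi> d (Pop K P u)
        - 2 * wmean K \<pi> u * wmean K \<pi> d - 2 * r * wdot K \<pi> u d)
      + t\<^sup>2 * (lag_cov d - r * norm2 d) \<le> 0"
  proof
    fix t
    show "t * (wdot K \<pi> u (Pop K P d) + wdot K \<pi> d (Pop K P u)
        - 2 * wmean K \<pi> u * wmean K \<pi> d - 2 * r * wdot K \<pi> u d)
      + t\<^sup>2 * (lag_cov d - r * norm2 d) \<le> 0"
      using max[of "\<lambda>j. u j + t * d j"] u unfolding lag_cov_add by (simp add: algebra_simps)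
  qed
  then have zero: "wdot K \<pi> u (Pop K P d) + wdot K \<pi> d (Pop K P u)
      - 2 * wmean K \<pi> u * wmean K \<pi> d - 2 * r * wdot K \<pi> u d = 0"
    by (rule linear_le_quadratic_imp_zero)
  have "Pop K P d c = P c i" for c unfolding Pop_def d_def using i by (simp add: if_distrib cong: if_cong)
  then have "wdot K \<pi> u (Pop K P d) = \<pi> i * Padj K P \<pi> u i"
    using pi_pos i unfolding wdot_def Padj_def
    by (simp add: sum_distrib_left mult_ac less_imp_neq[symmetric])
  moreover have "wdot K \<pi> d (Pop K P u) = \<pi> i * Pop K P u i"
    using sum_mult_indicator[OF i, of \<pi> "Pop K P u"] unfolding wdot_def d_def .
  moreover have "wmean K \<pi> d = \<pi> i"
    using sum_mult_indicator[OF i, of \<pi> "\<lambda>_. 1"] unfolding wmean_def d_def by simp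
  moreover have "wdot K \<pi> u d = \<pi> i * u i"
    using sum_mult_indicator[OF i, of "\<lambda>j. \<pi> j * u j" "\<lambda>_. 1"] unfolding wdot_def d_def
    by (simp add: mult_ac)
  ultimately have "\<pi> i * (Padj K P \<pi> u i + Pop K P u i) = \<pi> i * (2 * wmean K \<pi> u + 2 * r * u i)"
    using zero by (simp add: algebra_simps)
  moreover have "\<pi> i \<noteq> 0" using pi_pos i by (simp add: less_imp_neq[symmetric])
  ultimately show ?thesis by simp
qed

lemma symm_eigenvalue_le_one:
  assumes "\<exists>i<K. h i \<noteq> 0" "\<forall>i<K. (Pop K P h i + Padj K P \<pi> h i) / 2 = l * h i"
  shows "l \<le> 1"
proof -
  obtain i where i: "i < K" "h i \<noteq> 0" using assms(1) by auto
  have "l * norm2 h = (\<Sum>i<K. \<pi> i * h i * ((Pop K P h i + Padj K P \<pi> h i) / 2))"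
    using assms(2) unfolding wdot_def by (simp add: sum_distrib_left mult_ac)
  also have "\<dots> = (wdot K \<pi> h (Pop K P h) + wdot K \<pi> h (Padj K P \<pi> h)) / 2"
    unfolding wdot_def sum.distrib[symmetric] sum_divide_distrib
    by (rule sum.cong) (simp_all add: algebra_simps)
  also have "\<dots> = wdot K \<pi> h (Pop K P h)"
    unfolding wdot_Padj by (simp add: wdot_def mult_ac)
  also have "\<dots> \<le> 1 * norm2 h" using wdot_Pop_le_norm2 by simp
  finally show ?thesis using norm2_pos[of i h] i by (simp add: mult_le_cancel_right)
qed

lemma eigenvalue_le_lambda_plus:
  assumes "\<exists>i<K. h i \<noteq> 0" "wmean K \<pi> h = 0"
    "\<forall>i<K. (Pop K P h i + Padj K P \<pi> h i) / 2 = l * h i"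
  shows "l \<le> lambda_plus K P \<pi>"
proof -
  define S where "S = {l. \<exists>h. (\<exists>i<K. h i \<noteq> 0) \<and> (\<Sum>i<K. \<pi> i * h i) = 0 \<and>
        (\<forall>i<K. (Pop K P h i + Padj K P \<pi> h i) / 2 = l * h i)}"
  have "l \<in> S" using assms unfolding S_def wmean_def by blast
  moreover have "bdd_above S"
    unfolding S_def by (rule bdd_aboveI[of _ 1]) (use symm_eigenvalue_le_one in blast)
  ultimately show ?thesis unfolding lambda_plus_def S_def[symmetric] by (rule cSup_upper)
qed

lemma lag_cov_le_lambda_plus:
  assumes K: "K > 0"
  shows "lag_cov w \<le> max (lambda_plus K P \<pi>) 0 * norm2 w"
proof -
  obtain u where u1: "norm2 u = 1" and max: "\<And>w. lag_cov w \<le> lag_cov u * norm2 w"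
    using lag_cov_le_max_ratio[OF K] by blast
  define r where "r = lag_cov u"
  have eig: "Padj K P \<pi> u i + Pop K P u i = 2 * wmean K \<pi> u + 2 * r * u i" if "i < K" for i
    using max_ratio_stationary[of r u i] max u1 that unfolding r_def by simp
  have "r * wmean K \<pi> u = 0"
  proof -
    have "2 * wmean K \<pi> u = wmean K \<pi> (Padj K P \<pi> u) + wmean K \<pi> (Pop K P u)"
      unfolding wmean_Padj wmean_Pop by simp
    also have "\<dots> = (\<Sum>i<K. \<pi> i * (Padj K P \<pi> u i + Pop K P u i))"
      unfolding wmean_def by (simp add: sum.distrib algebra_simps)
    also have "\<dots> = (\<Sum>i<K. \<pi> i * (2 * wmean K \<pi> u + 2 * r * u i))"
      using eig by simp
    also have "\<dots> = 2 * wmean K \<pi> u * (\<Sum>i<K. \<pi> i) + 2 * r * wmean K \<pi> u"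
    proof -
      have "(\<Sum>i<K. \<pi> i * (2 * c + 2 * r * u i)) = 2 * c * (\<Sum>i<K. \<pi> i) + 2 * r * wmean K \<pi> u"
        for c
        unfolding wmean_def by (simp add: sum.distrib algebra_simps sum_distrib_left sum_distrib_right)
      then show ?thesis .
    qed
    finally show ?thesis using pi_sum by simp
  qed
  have "r \<le> max (lambda_plus K P \<pi>) 0"
  proof (cases "r > 0")
    case True
    then have mean0: "wmean K \<pi> u = 0" using \<open>r * wmean K \<pi> u = 0\<close> by simp
    have "\<exists>i<K. u i \<noteq> 0" using u1 norm2_eq_0_iff[of u] by auto
    moreover have "\<forall>i<K. (Pop K P u i + Padj K P \<pi> u i) / 2 = r * u i"
      using eig mean0 by (simp add: algebra_simps)
    ultimately have "r \<le> lambda_plus K P \<pi>"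
      using mean0 eigenvalue_le_lambda_plus by blast
    then show ?thesis by simp
  qed simp
  then show ?thesis using max[of w] norm2_nonneg[of w] unfolding r_def
    by (meson mult_right_mono order_trans)
qed

lemma wdot_Pop_le:
  assumes K: "K > 0"
  defines "l \<equiv> max (lambda_plus K P \<pi>) 0"
  shows "wdot K \<pi> u (Pop K P u) \<le> l * norm2 u + (1 - l) * (wmean K \<pi> u)\<^sup>2"
proof -
  define a where "a = wmean K \<pi> u"
  define v where "v = (\<lambda>i. u i + (-a) * 1)"
  have P1: "Pop K P (\<lambda>_. 1) i = 1" if "i < K" for i unfolding Pop_def using P_stoch that by simp
  have "wdot K \<pi> (\<lambda>_. 1) (Pop K P u) = a" "wdot K \<pi> u (Pop K P (\<lambda>_. 1)) = a"
    "wdot K \<pi> u (\<lambda>_. 1) = a" "wmean K \<pi> (\<lambda>_. 1) = 1" "norm2 (\<lambda>_. 1) = 1"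
    "wdot K \<pi> (\<lambda>_. 1) (Pop K P (\<lambda>_. 1)) = 1"
    unfolding a_def using wmean_Pop[of u] P1 pi_sum by (simp_all add: wdot_def wmean_def)
  then have cov_v: "lag_cov v = wdot K \<pi> u (Pop K P u) - a\<^sup>2"
    and norm_v: "norm2 v = norm2 u - a\<^sup>2"
    unfolding v_def lag_cov_add by (simp_all add: a_def power2_eq_square algebra_simps)
  have "lag_cov v \<le> l * norm2 v" unfolding l_def by (rule lag_cov_le_lambda_plus[OF K])
  then have "wdot K \<pi> u (Pop K P u) \<le> a\<^sup>2 + l * (norm2 u - a\<^sup>2)" unfolding cov_v norm_v by simp
  then show ?thesis unfolding a_def by (simp add: algebra_simps)
qed

end

section \<open>A Chernoff bound for the occupation times of the chain\<close>

lemma finite_labelings: "finite (labelings n K)"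
  unfolding labelings_def by (simp add: finite_PiE)

lemma sum_labelings_Suc:
  "(\<Sum>C\<in>labelings (Suc n) K. f C) = (\<Sum>C\<in>labelings n K. \<Sum>b<K. f (C(n := b)))"
proof -
  have eq: "labelings (Suc n) K = (\<lambda>(y, g). g(n := y)) ` ({..<K} \<times> labelings n K)"
    unfolding labelings_def lessThan_Suc by (rule PiE_insert_eq)
  have inj: "inj_on (\<lambda>(y, g). g(n := y)) ({..<K} \<times> labelings n K)"
    unfolding labelings_def by (rule inj_combinator) simp
  have "(\<Sum>C\<in>labelings (Suc n) K. f C) = (\<Sum>(y, g)\<in>{..<K} \<times> labelings n K. f (g(n := y)))"
    unfolding eq by (subst sum.reindex[OF inj]) (simp add: case_prod_unfold)
  also have "\<dots> = (\<Sum>y<K. \<Sum>g\<in>labelings n K. f (g(n := y)))"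
    by (rule sum.cartesian_product[symmetric])
  also have "\<dots> = (\<Sum>C\<in>labelings n K. \<Sum>b<K. f (C(n := b)))"
    by (rule sum.swap)
  finally show ?thesis .
qed

lemma markov_weight_Suc_upd:
  "markov_weight P \<pi> (Suc (Suc m)) (C(Suc m := b)) = markov_weight P \<pi> (Suc m) C * P (C m) b"
  unfolding markov_weight_def by (simp add: prod.lessThan_Suc)

text \<open>\<open>tilted_forward K P \<pi> g m j\<close> is \<open>E[g(C\<^sub>0) \<cdot>\<cdot>\<cdot> g(C\<^sub>m); C\<^sub>m = j]\<close>.\<close>
fun tilted_forward ::
  "nat \<Rightarrow> (nat \<Rightarrow> nat \<Rightarrow> real) \<Rightarrow> (nat \<Rightarrow> real) \<Rightarrow> (nat \<Rightarrow> real) \<Rightarrow> nat \<Rightarrow> nat \<Rightarrow> real" where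
  "tilted_forward K P \<pi> g 0 j = \<pi> j * g j"
| "tilted_forward K P \<pi> g (Suc m) j = g j * (\<Sum>c<K. tilted_forward K P \<pi> g m c * P c j)"

lemma sum_markov_weight_prod:
  "(\<Sum>C\<in>labelings (Suc m) K. markov_weight P \<pi> (Suc m) C * (\<Prod>i<Suc m. g (C i)) * \<phi> (C m))
    = (\<Sum>j<K. tilted_forward K P \<pi> g m j * \<phi> j)"
proof (induction m arbitrary: \<phi>)
  case 0
  show ?case unfolding sum_labelings_Suc by (simp add: labelings_def markov_weight_def)
next
  case (Suc m)
  define \<psi> where "\<psi> c = (\<Sum>b<K. P c b * g b * \<phi> b)" for c
  have "(\<Sum>C\<in>labelings (Suc (Suc m)) K.
        markov_weight P \<pi> (Suc (Suc m)) C * (\<Prod>i<Suc (Suc m). g (C i)) * \<phi> (C (Suc m)))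
      = (\<Sum>C\<in>labelings (Suc m) K. markov_weight P \<pi> (Suc m) C * (\<Prod>i<Suc m. g (C i)) * \<psi> (C m))"
    unfolding sum_labelings_Suc[where n = "Suc m"] markov_weight_Suc_upd \<psi>_def
    by (simp add: prod.lessThan_Suc sum_distrib_left mult_ac del: prod.lessThan_Suc_shift)
  also have "\<dots> = (\<Sum>c<K. tilted_forward K P \<pi> g m c * \<psi> c)" by (rule Suc.IH)
  also have "\<dots> = (\<Sum>c<K. \<Sum>b<K. tilted_forward K P \<pi> g m c * P c b * g b * \<phi> b)"
    unfolding \<psi>_def by (simp add: sum_distrib_left mult_ac)
  also have "\<dots> = (\<Sum>b<K. \<Sum>c<K. tilted_forward K P \<pi> g m c * P c b * g b * \<phi> b)"
    by (rule sum.swap)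
  also have "\<dots> = (\<Sum>b<K. tilted_forward K P \<pi> g (Suc m) b * \<phi> b)"
    by (simp add: sum_distrib_left sum_distrib_right mult_ac)
  finally show ?case .
qed

text \<open>The adjoint in \<open>L\<^sup>2(\<pi>)\<close> of \<open>\<surd>g P \<surd>g\<close>, written as a matrix.\<close>
definition tilted_adjoint :: "(nat \<Rightarrow> nat \<Rightarrow> real) \<Rightarrow> (nat \<Rightarrow> real) \<Rightarrow> (nat \<Rightarrow> real) \<Rightarrow> nat \<Rightarrow> nat \<Rightarrow> real"
  where "tilted_adjoint P \<pi> g j c = \<pi> c * sqrt (g c) * P c j * sqrt (g j) / \<pi> j"

text \<open>By the spectral-gap bound the quadratic form of \<open>\<surd>g P \<surd>g\<close> is at most that of
  \<open>\<surd>g (l I + (1 - l) \<pi>) \<surd>g\<close>, a rank-one perturbation of a diagonal form; the secular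
  condition on \<open>b\<close> is what bounds the latter by \<open>b\<close>.\<close>
lemma rank_one_quadratic_bound:
  fixes l b :: real
  assumes l: "0 \<le> l" "l < 1" and g: "\<forall>i<K. 0 < g i \<and> g i \<le> 1" and b: "b > l"
    and F: "(1 - l) * (\<Sum>i<K. \<pi> i * g i / (b - l * g i)) \<le> 1" and pi: "\<forall>i<K. \<pi> i > 0"
  shows "l * (\<Sum>i<K. \<pi> i * g i * (y i)\<^sup>2) + (1 - l) * (\<Sum>i<K. \<pi> i * (sqrt (g i) * y i))\<^sup>2
     \<le> b * (\<Sum>i<K. \<pi> i * (y i)\<^sup>2)"
proof -
  define d where "d i = b - l * g i" for i
  have d: "d i > 0" if "i < K" for i
    using mult_left_mono[of "g i" 1 l] g that l b unfolding d_def by auto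
  have "(\<Sum>i<K. \<pi> i * (sqrt (g i) * y i))\<^sup>2 =
      (\<Sum>i<K. sqrt (\<pi> i * g i / d i) * (sqrt (\<pi> i * d i) * y i))\<^sup>2"
  proof -
    have "\<pi> i * (sqrt (g i) * y i) = sqrt (\<pi> i * g i / d i) * (sqrt (\<pi> i * d i) * y i)"
      if "i < K" for i
    proof -
      have "sqrt (\<pi> i * g i / d i) * sqrt (\<pi> i * d i) = sqrt (\<pi> i * \<pi> i * g i)"
        using d[OF that] by (simp add: real_sqrt_mult[symmetric] field_simps)
      also have "\<dots> = \<pi> i * sqrt (g i)" using pi that by (simp add: real_sqrt_mult abs_of_pos)
      finally show ?thesis by (metis mult.assoc)
    qed
    then show ?thesis by (metis (no_types, lifting) lessThan_iff sum.cong)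
  qed
  also have "\<dots> \<le> (\<Sum>i<K. (sqrt (\<pi> i * g i / d i))\<^sup>2) * (\<Sum>i<K. (sqrt (\<pi> i * d i) * y i)\<^sup>2)"
    by (rule Cauchy_Schwarz_ineq_sum)
  also have "\<dots> = (\<Sum>i<K. \<pi> i * g i / d i) * (\<Sum>i<K. \<pi> i * d i * (y i)\<^sup>2)"
    using pi g d by (simp add: less_imp_le power_mult_distrib)
  finally have cs: "(\<Sum>i<K. \<pi> i * (sqrt (g i) * y i))\<^sup>2
      \<le> (\<Sum>i<K. \<pi> i * g i / d i) * (\<Sum>i<K. \<pi> i * d i * (y i)\<^sup>2)" .
  have D: "0 \<le> (\<Sum>i<K. \<pi> i * d i * (y i)\<^sup>2)"
    using pi d by (intro sum_nonneg) (simp add: less_imp_le)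
  have "(1 - l) * (\<Sum>i<K. \<pi> i * (sqrt (g i) * y i))\<^sup>2
      \<le> ((1 - l) * (\<Sum>i<K. \<pi> i * g i / d i)) * (\<Sum>i<K. \<pi> i * d i * (y i)\<^sup>2)"
    using mult_left_mono[OF cs, of "1 - l"] l by (simp add: mult.assoc)
  also have "\<dots> \<le> (\<Sum>i<K. \<pi> i * d i * (y i)\<^sup>2)"
    using mult_right_mono[OF F D] unfolding d_def by simp
  finally have "(1 - l) * (\<Sum>i<K. \<pi> i * (sqrt (g i) * y i))\<^sup>2 \<le> (\<Sum>i<K. \<pi> i * d i * (y i)\<^sup>2)" .
  moreover have "(\<Sum>i<K. \<pi> i * d i * (y i)\<^sup>2)
      = b * (\<Sum>i<K. \<pi> i * (y i)\<^sup>2) - l * (\<Sum>i<K. \<pi> i * g i * (y i)\<^sup>2)"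
    unfolding d_def by (simp add: sum_distrib_left algebra_simps sum_subtractf)
  ultimately show ?thesis by linarith
qed

context stationary_chain
begin

lemma markov_weight_nonneg:
  assumes "C \<in> labelings n K" shows "markov_weight P \<pi> n C \<ge> 0"
proof -
  have "\<forall>i<n. C i < K" using assms unfolding labelings_def by auto
  then show ?thesis
    unfolding markov_weight_def using pi_pos P_nonneg
    by (auto intro!: prod_nonneg mult_nonneg_nonneg simp: less_imp_le)
qed

lemma sum_markov_weight: assumes "n > 0" shows "(\<Sum>C\<in>labelings n K. markov_weight P \<pi> n C) = 1"
proof -
  obtain m where m: "n = Suc m" using assms by (cases n) auto
  have "tilted_forward K P \<pi> (\<lambda>_. 1) m j = \<pi> j" if "j < K" for j
    using that by (induction m arbitrary: j) (simp_all add: pi_stat)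
  then have "(\<Sum>j<K. tilted_forward K P \<pi> (\<lambda>_. 1) m j * 1) = 1" using pi_sum by simp
  then show ?thesis using sum_markov_weight_prod[where m = m and P = P and \<pi> = \<pi> and K = K and g = "\<lambda>_. 1" and \<phi> = "\<lambda>_. 1"] m by simp
qed

lemma tilted_adjoint_nonneg:
  assumes "\<forall>i<K. g i \<ge> 0" shows "\<forall>i<K. \<forall>j<K. tilted_adjoint P \<pi> g i j \<ge> 0"
  unfolding tilted_adjoint_def using assms pi_pos P_nonneg
  by (auto intro!: divide_nonneg_pos mult_nonneg_nonneg simp: less_imp_le)

lemma tilted_forward_eq_funpow:
  assumes "\<forall>i<K. g i > 0" and "j < K"
  shows "tilted_forward K P \<pi> g m j
    = \<pi> j * sqrt (g j) * (mat_act K (tilted_adjoint P \<pi> g) ^^ m) (\<lambda>i. sqrt (g i)) j"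
  using assms(2)
proof (induction m arbitrary: j)
  case 0
  then show ?case using assms(1) by (simp add: mult.assoc abs_of_pos)
next
  case (Suc m)
  let ?T = "mat_act K (tilted_adjoint P \<pi> g)"
  have gj: "g j = sqrt (g j) * sqrt (g j)" using assms(1) Suc.prems by (simp add: less_imp_le)
  have pj: "\<pi> j \<noteq> 0" using pi_pos Suc.prems by (simp add: less_imp_neq[symmetric])
  have "tilted_forward K P \<pi> g (Suc m) j
      = g j * (\<Sum>c<K. \<pi> c * sqrt (g c) * (?T ^^ m) (\<lambda>i. sqrt (g i)) c * P c j)"
    using Suc.IH by simp
  also have "\<dots> = \<pi> j * sqrt (g j) * (\<Sum>c<K. tilted_adjoint P \<pi> g j c * (?T ^^ m) (\<lambda>i. sqrt (g i)) c)"
    unfolding tilted_adjoint_def sum_distrib_left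
    by (subst gj, intro sum.cong refl) (use pj in \<open>simp add: field_simps\<close>)
  also have "\<dots> = \<pi> j * sqrt (g j) * (?T ^^ Suc m) (\<lambda>i. sqrt (g i)) j"
    by (simp add: mat_act_def)
  finally show ?case .
qed

lemma quadratic_form_tilted_adjoint_le:
  assumes K: "K > 0" and g: "\<forall>i<K. 0 < g i \<and> g i \<le> 1"
    and l: "l = max (lambda_plus K P \<pi>) 0" "l < 1" and b: "b > l"
    and F: "(1 - l) * (\<Sum>i<K. \<pi> i * g i / (b - l * g i)) \<le> 1"
  shows "wdot K \<pi> y (mat_act K (tilted_adjoint P \<pi> g) y) \<le> b * wdot K \<pi> y y"
proof -
  define u where "u i = sqrt (g i) * y i" for i
  have norm_u: "wdot K \<pi> u u = (\<Sum>i<K. \<pi> i * g i * (y i)\<^sup>2)"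
    unfolding wdot_def u_def using g
    by (intro sum.cong refl) (simp add: power2_eq_square less_imp_le mult_ac)
  have "wdot K \<pi> y (mat_act K (tilted_adjoint P \<pi> g) y) = (\<Sum>c<K. \<Sum>i<K. \<pi> c * u c * P c i * u i)"
    unfolding wdot_def mat_act_def tilted_adjoint_def u_def sum_distrib_left using pi_pos
    by (subst sum.swap) (intro sum.cong refl, auto simp: field_simps)
  also have "\<dots> = wdot K \<pi> u (Pop K P u)"
    unfolding wdot_def Pop_def by (simp add: sum_distrib_left mult_ac)
  also have "\<dots> \<le> l * wdot K \<pi> u u + (1 - l) * (wmean K \<pi> u)\<^sup>2"
    unfolding l by (rule wdot_Pop_le[OF K])
  also have "\<dots> = l * (\<Sum>i<K. \<pi> i * g i * (y i)\<^sup>2) + (1 - l) * (\<Sum>i<K. \<pi> i * (sqrt (g i) * y i))\<^sup>2"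
    unfolding norm_u wmean_def u_def ..
  also have "\<dots> \<le> b * wdot K \<pi> y y"
    using rank_one_quadratic_bound[OF _ l(2) g b F pi_pos] l(1)
    by (simp add: wdot_def power2_eq_square mult.assoc)
  finally show ?thesis .
qed

text \<open>The Laplace transform of the occupation time of state \<open>k\<close>: with
  \<open>g = a\<close> on \<open>k\<close> and \<open>g = 1\<close> elsewhere,
  \<open>E[\<Prod>\<^sub>i g(C\<^sub>i)] = \<langle>\<surd>g, T\<^sup>n\<^sup>-\<^sup>1 \<surd>g\<rangle>\<^sub>\<pi>\<close> with \<open>T\<close> the tilted adjoint, and Berger's
  inequality bounds it by \<open>b\<^sup>n\<^sup>-\<^sup>1 \<pi>(g) \<le> b\<^sup>n\<close>.\<close>
lemma markov_laplace_le:
  assumes K: "K > 0" and k: "k < K" and n: "n > 0" and a: "0 < a" "a \<le> 1"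
    and l: "l = max (lambda_plus K P \<pi>) 0" "l < 1" and b: "b > l"
    and F: "(1 - l) * (\<pi> k * a / (b - l * a) + (1 - \<pi> k) / (b - l)) \<le> 1"
    and hb: "1 - \<pi> k + \<pi> k * a \<le> b"
  shows "(\<Sum>C\<in>labelings n K. markov_weight P \<pi> n C * (\<Prod>i<n. if C i = k then a else 1)) \<le> b ^ n"
proof -
  define g where "g c = (if c = k then a else 1)" for c
  obtain m where m: "n = Suc m" using n by (cases n) auto
  have g: "\<forall>i<K. 0 < g i \<and> g i \<le> 1" unfolding g_def using a by auto
  have sum_if: "(\<Sum>i<K. if i = k then A i else B i) = A k + (\<Sum>i<K. B i) - B k"
    for A B :: "nat \<Rightarrow> real"
    using k by (simp add: sum.If_cases Int_absorb1 lessThan_iff sum_diff1 Diff_eq[symmetric])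
  have "(\<Sum>i<K. \<pi> i * g i / (b - l * g i)) = \<pi> k * a / (b - l * a) + (1 - \<pi> k) / (b - l)"
    unfolding g_def if_distrib[of "\<lambda>x. _ * x / (b - l * x)"] sum_if
    using pi_sum by (simp add: sum_divide_distrib[symmetric] diff_divide_distrib)
  then have F': "(1 - l) * (\<Sum>i<K. \<pi> i * g i / (b - l * g i)) \<le> 1" using F by simp
  have "wdot K \<pi> (\<lambda>i. sqrt (g i)) (\<lambda>i. sqrt (g i)) = (\<Sum>i<K. if i = k then \<pi> i * a else \<pi> i)"
    unfolding wdot_def g_def using a by (intro sum.cong refl) (simp add: mult.assoc less_imp_le)
  then have norm_g: "wdot K \<pi> (\<lambda>i. sqrt (g i)) (\<lambda>i. sqrt (g i)) = 1 - \<pi> k + \<pi> k * a"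
    unfolding sum_if using pi_sum by simp
  have "(\<Sum>C\<in>labelings n K. markov_weight P \<pi> n C * (\<Prod>i<n. g (C i)))
      = (\<Sum>j<K. tilted_forward K P \<pi> g m j * 1)"
    using sum_markov_weight_prod[where m = m and P = P and \<pi> = \<pi> and K = K and g = g and \<phi> = "\<lambda>_. 1"] m by simp
  also have "\<dots> = wdot K \<pi> (\<lambda>i. sqrt (g i)) ((mat_act K (tilted_adjoint P \<pi> g) ^^ m) (\<lambda>i. sqrt (g i)))"
    unfolding wdot_def using tilted_forward_eq_funpow g by simp
  also have "\<dots> \<le> b ^ m * wdot K \<pi> (\<lambda>i. sqrt (g i)) (\<lambda>i. sqrt (g i))"
    using l b by (intro wdot_funpow_mat_act_le pi_pos tilted_adjoint_nonneg
        quadratic_form_tilted_adjoint_le[OF K g l b F'] allI impI) (auto simp: g less_imp_le)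
  also have "\<dots> = b ^ m * (1 - \<pi> k + \<pi> k * a)"
    unfolding norm_g ..
  also have "\<dots> \<le> b ^ n"
    using hb b l m by (simp add: mult_left_mono)
  finally show ?thesis unfolding g_def .
qed

lemma card_community_tail_le:
  assumes K: "K > 0" and k: "k < K" and n: "n > 0" and \<theta>: "\<theta> > 0"
    and l: "l = max (lambda_plus K P \<pi>) 0" "l < 1" and b: "b > l"
    and F: "(1 - l) * (\<pi> k * exp (-\<theta>) / (b - l * exp (-\<theta>)) + (1 - \<pi> k) / (b - l)) \<le> 1"
    and hb: "1 - \<pi> k + \<pi> k * exp (-\<theta>) \<le> b"
  shows "(\<Sum>C\<in>{C\<in>labelings n K. real (card (community n C k)) < x}. markov_weight P \<pi> n C)
    \<le> exp (\<theta> * x) * b ^ n"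
proof -
  define g where "g C = (\<Prod>i<n. if C i = k then exp (-\<theta>) else 1)" for C
  have g: "g C = exp (- \<theta> * real (card (community n C k)))" for C
  proof -
    have "{..<n} \<inter> {i. C i = k} = community n C k" unfolding community_def by auto
    then show ?thesis unfolding g_def
      by (simp add: prod.If_cases exp_of_nat_mult[symmetric] mult.commute)
  qed
  have "(\<Sum>C\<in>{C\<in>labelings n K. real (card (community n C k)) < x}. markov_weight P \<pi> n C)
      \<le> (\<Sum>C\<in>{C\<in>labelings n K. real (card (community n C k)) < x}.
            markov_weight P \<pi> n C * (exp (\<theta> * x) * g C))"
  proof (rule sum_mono)
    fix C assume C: "C \<in> {C\<in>labelings n K. real (card (community n C k)) < x}"
    have "exp (\<theta> * x) * g C = exp (\<theta> * (x - real (card (community n C k))))"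
      unfolding g by (simp add: exp_add[symmetric] algebra_simps)
    also have "\<dots> \<ge> 1" using C \<theta> by auto
    finally show "markov_weight P \<pi> n C \<le> markov_weight P \<pi> n C * (exp (\<theta> * x) * g C)"
      using markov_weight_nonneg[of C n] C by (simp add: mult_le_cancel_left1)
  qed
  also have "\<dots> \<le> (\<Sum>C\<in>labelings n K. markov_weight P \<pi> n C * (exp (\<theta> * x) * g C))"
    using markov_weight_nonneg by (intro sum_mono2 finite_labelings) (auto simp: g)
  also have "\<dots> = exp (\<theta> * x) * (\<Sum>C\<in>labelings n K. markov_weight P \<pi> n C * g C)"
    by (simp add: sum_distrib_left mult_ac)
  also have "\<dots> \<le> exp (\<theta> * x) * b ^ n"
    unfolding g_def using \<theta>
    by (intro mult_left_mono markov_laplace_le[OF K k n _ _ l b F hb]) auto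
  finally show ?thesis .
qed

end

section \<open>Choice of the Chernoff parameters\<close>

lemma ln_one_minus_le_quadratic:
  fixes x :: real assumes "0 \<le> x" "x < 1"
  shows "ln (1 - x) \<le> - x - x\<^sup>2 / 2"
proof -
  define f where "f y = ln (1 - y) + y + y\<^sup>2 / 2" for y :: real
  have "f x \<le> f 0"
  proof (rule DERIV_nonpos_imp_decreasing_open[OF assms(1)])
    fix y assume y: "0 < y" "y < x"
    then have y1: "1 - y > 0" using assms by simp
    have "(f has_real_derivative (- 1 / (1 - y) + 1 + y)) (at y)"
      unfolding f_def using y1 by (auto intro!: derivative_eq_intros simp: field_simps)
    moreover have "- 1 / (1 - y) + 1 + y = - (y\<^sup>2) / (1 - y)"
      using y1 by (simp add: field_simps power2_eq_square)
    ultimately show "\<exists>z. DERIV f y :> z \<and> z \<le> 0" using y1 by auto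
  next
    show "continuous_on {0..x} f" unfolding f_def using assms by (intro continuous_intros) auto
  qed
  then show ?thesis unfolding f_def by simp
qed

lemma chernoff_parameters_zero:
  fixes q p :: real
  assumes q: "0 < q" "q \<le> 1/2" and p: "q \<le> p" "p \<le> 1"
  obtains \<theta> b where "\<theta> > 0" "b > 0" "p * exp (-\<theta>) / b + (1 - p) / b \<le> 1"
    "1 - p + p * exp (-\<theta>) \<le> b" "\<theta> * q / 2 + ln b \<le> - (q\<^sup>2 / (2 + 4 / 3 * q))"
proof
  define b where "b = 1 - p / 2"
  have b0: "b > 0" unfolding b_def using p by simp
  have e: "exp (- ln 2) = (1/2::real)" by (simp add: exp_minus)
  show "ln 2 > (0::real)" "b > 0" using b0 by simp_all
  show "p * exp (- ln 2) / b + (1 - p) / b \<le> 1" "1 - p + p * exp (- ln 2) \<le> b"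
    unfolding e using b0 by (simp_all add: b_def field_simps)
  have "ln b \<le> ln (1 - q/2)" unfolding b_def using p q by (subst ln_le_cancel_iff) auto
  also have "\<dots> \<le> - (q/2) - (q/2)\<^sup>2/2" using q by (intro ln_one_minus_le_quadratic) auto
  finally have "ln 2 * q / 2 + ln b \<le> 25/36 * q / 2 - q/2 - (q/2)\<^sup>2/2"
    using ln2_le_25_over_36 q by (smt (verit) mult_right_mono divide_right_mono)
  also have "\<dots> \<le> - (q\<^sup>2 / (2 + 4 / 3 * q))"
  proof -
    have "(25/36 * q / 2 - q/2 - (q/2)\<^sup>2/2) * (2 + 4 / 3 * q) + q\<^sup>2
        = - (q / 108 * (33 - 59 * q + 18 * q\<^sup>2))"
      by (simp add: algebra_simps power2_eq_square power3_eq_cube)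
    also have "\<dots> \<le> 0"
      using q zero_le_power2[of q] by (intro neg_le_0_iff_le[THEN iffD2] mult_nonneg_nonneg) auto
    finally show ?thesis using q by (simp add: le_divide_eq field_simps)
  qed
  finally show "ln 2 * q / 2 + ln b \<le> - (q\<^sup>2 / (2 + 4 / 3 * q))" .
qed

lemma chernoff_polynomial_nonneg:
  fixes q e :: real
  assumes q: "0 < q" "q \<le> 1/2" and e: "0 < e" "e \<le> 1"
  shows "16 - 12*e + 104*q - 42*q*e + 18*q*e\<^sup>2 + 124*q\<^sup>2 - 114*q\<^sup>2*e - 228*q^3*e + 18*q^3*e\<^sup>2 \<ge> 0"
proof -
  have "q*e \<le> q" "q\<^sup>2*e \<le> q\<^sup>2" "q^3*e \<le> q^3" using q e by (simp_all add: mult_left_le)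
  moreover have "q^3 \<le> q\<^sup>2/2" "q\<^sup>2 \<le> q/2" using q by (simp_all add: power3_eq_cube power2_eq_square)
  moreover have "q*e\<^sup>2 \<ge> 0" "q^3*e\<^sup>2 \<ge> 0" using q e by simp_all
  ultimately show ?thesis using e q by linarith
qed

definition chernoff_shift :: "real \<Rightarrow> real \<Rightarrow> real \<Rightarrow> real" where
  "chernoff_shift l u p = (1 - l) * p * u / (1 - l + u * (l + (1 - l) * p))"

lemma chernoff_shift_mono:
  assumes l: "0 \<le> l" "l < 1" and u: "0 < u" and pq: "0 \<le> q" "q \<le> p"
  shows "chernoff_shift l u q \<le> chernoff_shift l u p"
proof -
  define e where "e = 1 - l"
  have e: "0 < e" unfolding e_def using l by simp
  have pos: "0 < e + u * (l + e * q)" "0 < e + u * (l + e * p)"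
    using e u l pq by (simp_all add: add_pos_nonneg)
  have "e*p*u * (e + u*(l + e*q)) - e*q*u * (e + u*(l + e*p)) = e*u*(p - q)*(e + u*l)"
    by (simp add: algebra_simps)
  moreover have "e*u*(p - q)*(e + u*l) \<ge> 0" using e u pq l by simp
  ultimately have "e*q*u * (e + u*(l + e*p)) \<le> e*p*u * (e + u*(l + e*q))" by linarith
  then show ?thesis unfolding chernoff_shift_def e_def[symmetric] using pos
    by (simp add: divide_le_eq le_divide_eq mult.commute mult.left_commute)
qed

text \<open>With \<open>e = 1 - l\<close> and \<open>\<delta> = e p u / D\<close>, the secular condition for \<open>b = 1 - \<delta>\<close> and
  \<open>e\<^sup>-\<^sup>\<theta> = 1 - u\<close> reduces to \<open>\<delta>\<^sup>2 - \<delta> D + e p u \<ge> 0\<close>.\<close>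
lemma secular_condition_chernoff_shift:
  fixes p l u :: real
  assumes p: "0 \<le> p" "p \<le> 1" and l: "0 \<le> l" "l < 1" and u: "0 < u" "u < 1 - l"
  defines "\<delta> \<equiv> chernoff_shift l u p"
  shows "\<delta> \<le> p * u"
    and "(1 - l) * (p * (1 - u) / (1 - \<delta> - l * (1 - u)) + (1 - p) / (1 - \<delta> - l)) \<le> 1"
proof -
  define e where "e = 1 - l"
  define D where "D = e + u*(l + e*p)"
  have e: "0 < e" and le: "l = 1 - e" unfolding e_def using l by simp_all
  have De: "D \<ge> e" unfolding D_def using u l e p by simp
  have dD: "\<delta> * D = e*p*u" unfolding \<delta>_def chernoff_shift_def D_def e_def using De e D_def e_def by simp
  have "e*p*u \<le> D*(p*u)" using mult_right_mono[OF De, of "p*u"] p u by (simp add: mult.assoc)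
  then show dpu: "\<delta> \<le> p * u"
    unfolding \<delta>_def chernoff_shift_def e_def[symmetric] D_def[symmetric] using De e
    by (simp add: divide_le_eq mult.commute)
  have "p * u \<le> u" "0 \<le> l * u" using mult_left_le_one_le[of u p] p u l by simp_all
  then have pos: "e - \<delta> > 0" "e - \<delta> + l*u > 0" using dpu u unfolding e_def by linarith+
  have "(e - \<delta> + l*u) * (e - \<delta>) - e * (p*(1-u)*(e - \<delta>) + (1-p)*(e - \<delta> + l*u))
      = \<delta>\<^sup>2 - \<delta>*D + e*p*u"
    unfolding D_def le by (simp add: algebra_simps power2_eq_square)
  then have "e * (p*(1-u)*(e - \<delta>) + (1-p)*(e - \<delta> + l*u)) \<le> (e - \<delta> + l*u) * (e - \<delta>)"
    using dD zero_le_power2[of \<delta>] by linarith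
  then have "e * (p*(1-u)*(e - \<delta>) + (1-p)*(e - \<delta> + l*u)) / ((e - \<delta> + l*u) * (e - \<delta>)) \<le> 1"
    using pos by (simp add: divide_le_eq)
  moreover have "e * (p*(1-u)*(e - \<delta>) + (1-p)*(e - \<delta> + l*u)) / ((e - \<delta> + l*u) * (e - \<delta>))
      = e * (p * (1-u) / (e - \<delta> + l*u) + (1 - p) / (e - \<delta>))"
    using pos by (simp add: field_simps)
  moreover have "1 - \<delta> - l = e - \<delta>" "1 - \<delta> - l * (1 - u) = e - \<delta> + l*u" "1 - l = e"
    unfolding le by (simp_all add: algebra_simps)
  ultimately show "(1 - l) * (p * (1 - u) / (1 - \<delta> - l * (1 - u)) + (1 - p) / (1 - \<delta> - l)) \<le> 1"
    by (simp only:)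
qed

lemma chernoff_exponent_le:
  fixes q l :: real
  assumes q: "0 < q" "q \<le> 1/2" and l: "0 \<le> l" "l < 1"
  defines "u \<equiv> 3 * q * (1 - l) / (2 + 8 * q)"
  shows "u / (1 - u) * q / 2 - chernoff_shift l u q
    \<le> - (q\<^sup>2 / (2 * ((1 + l) / (1 - l)) + 4 * (5 / (1 - l)) * q))"
proof -
  define e where "e = 1 - l"
  have e: "0 < e" "e \<le> 1" and le: "l = 1 - e" unfolding e_def using l by simp_all
  define X where "X = 2+8*q-3*q*e"
  define Y where "Y = 4-2*e+20*q"
  define Z where "Z = 2+11*q-3*q*e+3*e*q\<^sup>2"
  have "3*q*e \<le> 3*q" "0 \<le> 3*e*q\<^sup>2" using q e by simp_all
  then have X0: "X > 0" and Z0: "Z > 0" unfolding X_def Z_def using q by linarith+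
  have Y0: "Y > 0" unfolding Y_def using q e by simp
  have cancel: "(x/c)/(y/c) = x/y" if "c \<noteq> 0" for x y c :: real
    using that by (cases "y = 0") (simp_all add: field_simps)
  have w: "2+8*q > 0" using q by simp
  have r1: "u/(1-u) = 3*q*e/X"
  proof -
    have "1 - u = X/(2+8*q)" unfolding u_def X_def e_def using w by (simp add: field_simps)
    then show ?thesis unfolding u_def e_def[symmetric] using cancel w by simp
  qed
  have r2: "chernoff_shift l u q = 3*q\<^sup>2*e/Z"
  proof -
    have "e*q*u = (3*q\<^sup>2*e\<^sup>2)/(2+8*q)" unfolding u_def e_def[symmetric] using w
      by (simp add: power2_eq_square field_simps)
    moreover have "e + u*(l + e*q) = (e*Z)/(2+8*q)" unfolding u_def Z_def e_def[symmetric] le using w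
      by (simp add: field_simps power2_eq_square)
    ultimately have "chernoff_shift l u q = (3*q\<^sup>2*e\<^sup>2)/(e*Z)"
      unfolding chernoff_shift_def e_def[symmetric] using cancel w by (simp add: mult_ac)
    then show ?thesis using e by (simp add: power2_eq_square)
  qed
  have r3: "q\<^sup>2 / (2 * ((1 + l) / (1 - l)) + 4 * (5 / (1 - l)) * q) = q\<^sup>2*e/Y"
    unfolding Y_def le using e by (simp add: field_simps)
  have "6*X*Y - 3*Y*Z - 2*X*Z = 16 - 12*e + 104*q - 42*q*e + 18*q*e\<^sup>2 + 124*q\<^sup>2 - 114*q\<^sup>2*e
      - 228*q^3*e + 18*q^3*e\<^sup>2"
    unfolding X_def Y_def Z_def by (simp add: algebra_simps power2_eq_square power3_eq_cube)
  then have "3*Y*Z + 2*X*Z \<le> 6*X*Y" using chernoff_polynomial_nonneg[OF q e] by linarith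
  then have key: "3/(2*X) + 1/Y \<le> 3/Z" using X0 Y0 Z0 by (simp add: field_simps)
  have "u / (1 - u) * q / 2 - chernoff_shift l u q = q\<^sup>2*e * (3/(2*X)) - q\<^sup>2*e*(3/Z)"
    unfolding r1 r2 by (simp add: field_simps power2_eq_square)
  also have "\<dots> \<le> - (q\<^sup>2*e/Y)"
    using mult_left_mono[OF key, of "q\<^sup>2*e"] q e by (simp add: distrib_left)
  finally show ?thesis unfolding r3 .
qed

lemma chernoff_parameters_pos:
  fixes q p l :: real
  assumes q: "0 < q" "q \<le> 1/2" and p: "q \<le> p" "p \<le> 1" and l: "0 < l" "l < 1"
  obtains \<theta> b where "\<theta> > 0" "b > l"
    "(1 - l) * (p * exp (-\<theta>) / (b - l * exp (-\<theta>)) + (1 - p) / (b - l)) \<le> 1"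
    "1 - p + p * exp (-\<theta>) \<le> b"
    "\<theta> * q / 2 + ln b \<le> - (q\<^sup>2 / (2 * ((1 + l) / (1 - l)) + 4 * (5 / (1 - l)) * q))"
proof -
  define u where "u = 3 * q * (1 - l) / (2 + 8 * q)"
  define \<delta> where "\<delta> = chernoff_shift l u p"
  have u: "0 < u" "u < 1 - l"
  proof -
    have "3 * q * (1 - l) < (2 + 8 * q) * (1 - l)" using q l by (intro mult_strict_right_mono) auto
    then show "u < 1 - l" unfolding u_def using q by (simp add: divide_less_eq mult.commute)
  qed (use q l in \<open>simp add: u_def\<close>)
  have "0 \<le> p" "0 \<le> l" using p q l by simp_all
  note secular = secular_condition_chernoff_shift[OF \<open>0 \<le> p\<close> p(2) \<open>0 \<le> l\<close> l(2) u, folded \<delta>_def]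
  have "p * u \<le> u" using mult_left_le_one_le[of u p] p q u by simp
  then have \<delta>: "\<delta> < 1 - l" using secular(1) u by linarith
  have "- ln (1 - u) = ln (1 / (1 - u))" using u l by (simp add: ln_div)
  also have "\<dots> \<le> u / (1 - u)" using ln_le_minus_one[of "1 / (1 - u)"] u l by (simp add: field_simps)
  finally have "- ln (1 - u) * q / 2 + ln (1 - \<delta>) \<le> u / (1 - u) * q / 2 - chernoff_shift l u q"
    using ln_le_minus_one[of "1 - \<delta>"] chernoff_shift_mono[of l u q p] \<delta> u l p q
    unfolding \<delta>_def by (smt (verit) mult_right_mono divide_right_mono)
  also have "\<dots> \<le> - (q\<^sup>2 / (2 * ((1 + l) / (1 - l)) + 4 * (5 / (1 - l)) * q))"
    unfolding u_def using q l by (intro chernoff_exponent_le) auto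
  finally show ?thesis
    using that[of "- ln (1 - u)" "1 - \<delta>"] secular p q l u \<delta> by (simp add: algebra_simps)
qed

lemma chernoff_parameters:
  fixes q p lam :: real
  assumes q: "0 < q" "q \<le> 1/2" and p: "q \<le> p" "p \<le> 1" and lam: "lam < 1"
  defines "l \<equiv> max lam 0"
  obtains \<theta> b where "\<theta> > 0" "b > l"
    "(1 - l) * (p * exp (-\<theta>) / (b - l * exp (-\<theta>)) + (1 - p) / (b - l)) \<le> 1"
    "1 - p + p * exp (-\<theta>) \<le> b"
    "\<theta> * q / 2 + ln b \<le> - (q\<^sup>2 / (2 * A1 lam + 4 * A2 lam * q))"
proof (cases "lam \<le> 0")
  case True
  obtain \<theta> b where "\<theta> > 0" "b > 0" "p * exp (-\<theta>) / b + (1 - p) / b \<le> 1"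
    "1 - p + p * exp (-\<theta>) \<le> b" "\<theta> * q / 2 + ln b \<le> - (q\<^sup>2 / (2 + 4 / 3 * q))"
    by (rule chernoff_parameters_zero[OF q p])
  then show ?thesis using True by (intro that[of \<theta> b]) (simp_all add: l_def A1_def A2_def)
next
  case False
  then have "0 < lam" by simp
  obtain \<theta> b where "\<theta> > 0" "b > lam"
    "(1 - lam) * (p * exp (-\<theta>) / (b - lam * exp (-\<theta>)) + (1 - p) / (b - lam)) \<le> 1"
    "1 - p + p * exp (-\<theta>) \<le> b"
    "\<theta> * q / 2 + ln b \<le> - (q\<^sup>2 / (2 * ((1 + lam) / (1 - lam)) + 4 * (5 / (1 - lam)) * q))"
    by (rule chernoff_parameters_pos[OF q p \<open>0 < lam\<close> lam])
  then show ?thesis using False by (intro that[of \<theta> b]) (simp_all add: l_def A1_def A2_def)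
qed

section \<open>The stochastic block model\<close>

lemma finite_image_pairs: "finite {f k j | k j. k < (K::nat) \<and> j < K \<and> R k j}"
  by (rule finite_subset[of _ "(\<lambda>(k,j). f k j) ` ({..<K} \<times> {..<K})"]) auto

lemma pi_min_le: "i < K \<Longrightarrow> pi_min K \<pi> \<le> \<pi> i"
  unfolding pi_min_def by (intro Min_le) auto

lemma pi_min_pos: "K > 0 \<Longrightarrow> \<forall>i<K. \<pi> i > 0 \<Longrightarrow> pi_min K \<pi> > 0"
  unfolding pi_min_def by (subst Min_gr_iff) auto

lemma pi_min_le_half:
  assumes "K \<ge> 2" "(\<Sum>i<K. \<pi> i) = 1" shows "pi_min K \<pi> \<le> 1 / 2"
proof -
  have "real K * pi_min K \<pi> \<le> 1"
    using sum_mono[of "{..<K}" "\<lambda>_. pi_min K \<pi>" \<pi>] pi_min_le assms(2) by simp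
  then show ?thesis using assms(1) mult_right_mono[of 2 "real K" "pi_min K \<pi>"]
    by (cases "pi_min K \<pi> \<ge> 0") auto
qed

lemma Q0_le_Lmax: "k < K \<Longrightarrow> l < K \<Longrightarrow> Q0 k l \<le> Lmax K Q0"
  unfolding Lmax_def by (intro Max_ge finite_image_pairs[where R = "\<lambda>_ _. True", simplified]) auto

lemma Lmax_le_one:
  assumes "K > 0" "\<forall>k<K. \<forall>l<K. Q0 k l \<le> 1" shows "Lmax K Q0 \<le> 1"
  unfolding Lmax_def using assms
  by (subst Max_le_iff) (auto intro: finite_image_pairs[where R = "\<lambda>_ _. True", simplified])

lemma Dsq_le: "k < K \<Longrightarrow> j < K \<Longrightarrow> j \<noteq> k \<Longrightarrow> Dsq K Q0 \<le> (\<Sum>r<K. (Q0 r k - Q0 r j)\<^sup>2)"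
  unfolding Dsq_def by (intro Min_le finite_image_pairs) blast

text \<open>If two columns of \<open>Q\<^sub>0\<close> differ, some entry of \<open>Q\<^sub>0 \<ge> 0\<close> is positive.\<close>
lemma Lmax_pos:
  assumes "K \<ge> 2" "\<forall>k<K. \<forall>l<K. 0 \<le> Q0 k l" "Dsq K Q0 > 0" shows "Lmax K Q0 > 0"
proof -
  have "(\<Sum>r<K. (Q0 r 1 - Q0 r 0)\<^sup>2) \<in> {(\<Sum>r<K. (Q0 r k - Q0 r l)\<^sup>2) | k l. k < K \<and> l < K \<and> l \<noteq> k}"
    using assms(1) by (intro CollectI exI[of _ 1] exI[of _ 0]) simp
  then have "Dsq K Q0 \<in> {(\<Sum>r<K. (Q0 r k - Q0 r l)\<^sup>2) | k l. k < K \<and> l < K \<and> l \<noteq> k}"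
    unfolding Dsq_def by (intro Min_in finite_image_pairs) blast+
  then obtain k l where kl: "k < K" "l < K" "Dsq K Q0 = (\<Sum>r<K. (Q0 r k - Q0 r l)\<^sup>2)" by blast
  have "\<exists>r<K. Q0 r k \<noteq> Q0 r l"
  proof (rule ccontr)
    assume "\<not> ?thesis"
    then have "Dsq K Q0 = 0" using kl by simp
    then show False using assms(3) by simp
  qed
  then obtain r where r: "r < K" "Q0 r k \<noteq> Q0 r l" by blast
  moreover have "0 \<le> Q0 r k" "0 \<le> Q0 r l" using assms(2) kl r by auto
  ultimately have "0 < Q0 r k \<or> 0 < Q0 r l" by linarith
  moreover have "Q0 r k \<le> Lmax K Q0" "Q0 r l \<le> Lmax K Q0" using Q0_le_Lmax r kl by auto
  ultimately show ?thesis by linarith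
qed

lemma finite_pairs: "finite (pairs n)"
  by (rule finite_subset[of _ "{..<n} \<times> {..<n}"]) (auto simp: pairs_def)

lemma sum_sbm_weight: "(\<Sum>E\<in>graphs n. sbm_weight Q n C E) = 1"
proof -
  define f where "f x = Q (C (fst x)) (C (snd x))" for x
  note fin = finite_pairs[of n]
  have "sbm_weight Q n C E = (\<Prod>x\<in>E. f x) * (\<Prod>x\<in>pairs n - E. 1 - f x)" if "E \<subseteq> pairs n" for E
  proof -
    have "sbm_weight Q n C E = (\<Prod>x\<in>pairs n. if x \<in> E then f x else 1 - f x)"
      unfolding sbm_weight_def f_def by (intro prod.cong) auto
    also have "\<dots> = (\<Prod>x\<in>pairs n \<inter> E. f x) * (\<Prod>x\<in>pairs n - E. 1 - f x)"
      using prod.If_cases[OF fin, of "\<lambda>x. x \<in> E" f "\<lambda>x. 1 - f x"] by (simp add: Diff_eq)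
    finally show ?thesis using that by (simp add: Int_absorb1)
  qed
  then have "(\<Sum>E\<in>graphs n. sbm_weight Q n C E) = (\<Prod>x\<in>pairs n. f x + (1 - f x))"
    unfolding graphs_def prod_add[OF fin] by (intro sum.cong) auto
  then show ?thesis by simp
qed

context
  fixes Q :: "nat \<Rightarrow> nat \<Rightarrow> real" and n :: nat and C :: "nat \<Rightarrow> nat"
  assumes Q_range: "\<forall>i<n. \<forall>j<n. 0 \<le> Q (C i) (C j) \<and> Q (C i) (C j) \<le> 1"
begin

lemma sbm_weight_nonneg: "sbm_weight Q n C E \<ge> 0"
  unfolding sbm_weight_def using Q_range by (intro prod_nonneg) (auto simp: pairs_def)

lemma sbm_prob_mono: "(\<And>E. A E \<Longrightarrow> B E) \<Longrightarrow> sbm_prob Q n C A \<le> sbm_prob Q n C B"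
  unfolding sbm_prob_def graphs_def using sbm_weight_nonneg finite_pairs by (intro sum_mono2) auto

lemma sbm_prob_le_one: "sbm_prob Q n C A \<le> 1"
  using sbm_prob_mono[of A "\<lambda>_. True"] sum_sbm_weight[of Q n C]
  unfolding sbm_prob_def by simp

end

lemma labelings_range: "C \<in> labelings n K \<Longrightarrow> i < n \<Longrightarrow> C i < K"
  unfolding labelings_def by auto

lemma A1_A2_nonpos: "1 \<le> lam \<Longrightarrow> 0 \<le> q \<Longrightarrow> 2 * A1 lam + 4 * A2 lam * q \<le> 0"
  unfolding A1_def A2_def by (simp add: divide_nonneg_nonpos mult_nonpos_nonneg add_nonpos_nonpos)

context stationary_chain
begin

lemma msbm_prob_le_one:
  assumes n: "n > 0" and Q: "\<forall>k<K. \<forall>l<K. 0 \<le> Q k l \<and> Q k l \<le> 1"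
  shows "msbm_prob K P \<pi> Q n A \<le> 1"
proof -
  have "msbm_prob K P \<pi> Q n A \<le> (\<Sum>C\<in>labelings n K. markov_weight P \<pi> n C * 1)"
    unfolding msbm_prob_def using Q markov_weight_nonneg labelings_range
    by (intro sum_mono mult_left_mono sbm_prob_le_one) auto
  then show ?thesis using sum_markov_weight[OF n] by simp
qed

lemma msbm_prob_le_union:
  assumes n: "n > 0" and Q: "\<forall>k<K. \<forall>l<K. 0 \<le> Q k l \<and> Q k l \<le> 1" and \<epsilon>: "\<epsilon> \<ge> 0"
    and good: "\<And>C. C \<in> labelings n K \<Longrightarrow> \<forall>k<K. \<not> B k C \<Longrightarrow> sbm_prob Q n C (A C) \<le> \<epsilon>"
  shows "msbm_prob K P \<pi> Q n A \<le> \<epsilon> + (\<Sum>k<K. \<Sum>C\<in>{C\<in>labelings n K. B k C}. markov_weight P \<pi> n C)"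
proof -
  define bad where "bad C = (\<Sum>k<K. if B k C then 1 else 0 :: real)" for C
  have "sbm_prob Q n C (A C) \<le> \<epsilon> + bad C" if C: "C \<in> labelings n K" for C
  proof (cases "\<forall>k<K. \<not> B k C")
    case True
    then show ?thesis using good[OF C] by (simp add: bad_def)
  next
    case False
    then obtain k where "k < K" "B k C" by blast
    then have "1 \<le> bad C" unfolding bad_def
      using member_le_sum[of k "{..<K}" "\<lambda>k. if B k C then 1 else 0 :: real"] by simp
    moreover have "sbm_prob Q n C (A C) \<le> 1" using Q C labelings_range by (intro sbm_prob_le_one) auto
    ultimately show ?thesis using \<epsilon> by linarith
  qed
  then have "msbm_prob K P \<pi> Q n A \<le> (\<Sum>C\<in>labelings n K. markov_weight P \<pi> n C * (\<epsilon> + bad C))"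
    unfolding msbm_prob_def using markov_weight_nonneg by (intro sum_mono mult_left_mono) auto
  also have "\<dots> = \<epsilon> * (\<Sum>C\<in>labelings n K. markov_weight P \<pi> n C)
      + (\<Sum>k<K. \<Sum>C\<in>labelings n K. if B k C then markov_weight P \<pi> n C else 0)"
    unfolding bad_def distrib_left sum.distrib sum_distrib_left
    by (simp add: sum.swap[of _ "labelings n K"] if_distrib mult_ac cong: if_cong)
  also have "\<dots> = \<epsilon> + (\<Sum>k<K. \<Sum>C\<in>{C\<in>labelings n K. B k C}. markov_weight P \<pi> n C)"
    using sum_markov_weight[OF n] by (simp add: sum.inter_filter[OF finite_labelings])
  finally show ?thesis .
qed

lemma small_community_prob_le:
  assumes K: "K > 0" and k: "k < K" and n: "n > 0"
    and q: "0 < q" "q \<le> 1/2" "q \<le> \<pi> k" and lam: "lambda_plus K P \<pi> < 1"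
  shows "(\<Sum>C\<in>{C\<in>labelings n K. real (card (community n C k)) < real n * q / 2}. markov_weight P \<pi> n C)
    \<le> exp (- real n * q\<^sup>2 / (2 * A1 (lambda_plus K P \<pi>) + 4 * A2 (lambda_plus K P \<pi>) * q))"
proof -
  obtain \<theta> b where \<theta>: "\<theta> > 0" and b: "b > max (lambda_plus K P \<pi>) 0"
    and F: "(1 - max (lambda_plus K P \<pi>) 0) * (\<pi> k * exp (-\<theta>) / (b - max (lambda_plus K P \<pi>) 0 * exp (-\<theta>))
      + (1 - \<pi> k) / (b - max (lambda_plus K P \<pi>) 0)) \<le> 1"
    and hb: "1 - \<pi> k + \<pi> k * exp (-\<theta>) \<le> b"
    and exponent: "\<theta> * q / 2 + ln b \<le> - (q\<^sup>2 / (2 * A1 (lambda_plus K P \<pi>) + 4 * A2 (lambda_plus K P \<pi>) * q))"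
    using chernoff_parameters[OF q(1,2) q(3) pi_le_one[OF k] lam] by blast
  have "b > 0" using b by simp
  have "(\<Sum>C\<in>{C\<in>labelings n K. real (card (community n C k)) < real n * q / 2}. markov_weight P \<pi> n C)
      \<le> exp (\<theta> * (real n * q / 2)) * b ^ n"
    using lam by (intro card_community_tail_le[OF K k n \<theta> refl _ b F hb]) simp
  also have "b ^ n = exp (real n * ln b)" using \<open>b > 0\<close> by (simp add: exp_of_nat_mult)
  also have "exp (\<theta> * (real n * q / 2)) * exp (real n * ln b) = exp (real n * (\<theta> * q / 2 + ln b))"
    by (simp add: exp_add[symmetric] algebra_simps)
  also have "\<dots> \<le> exp (- real n * q\<^sup>2 / (2 * A1 (lambda_plus K P \<pi>) + 4 * A2 (lambda_plus K P \<pi>) * q))"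
    using mult_left_mono[OF exponent, of "real n"] by simp
  finally show ?thesis .
qed

lemma msbm_prob_le_balanced:
  assumes K: "K > 0" and n: "n > 0" and q: "0 < q" "q \<le> 1/2" "\<forall>k<K. q \<le> \<pi> k"
    and Q: "\<forall>k<K. \<forall>l<K. 0 \<le> Q k l \<and> Q k l \<le> 1" and \<epsilon>: "\<epsilon> \<ge> 0"
    and balanced: "\<And>C. C \<in> labelings n K \<Longrightarrow> \<forall>k<K. real n * q / 2 \<le> real (card (community n C k))
      \<Longrightarrow> sbm_prob Q n C (A C) \<le> \<epsilon>"
  shows "msbm_prob K P \<pi> Q n A \<le> \<epsilon> + 2 * real K *
    exp (- real n * q\<^sup>2 / (2 * A1 (lambda_plus K P \<pi>) + 4 * A2 (lambda_plus K P \<pi>) * q))"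
    (is "_ \<le> _ + 2 * real K * ?bound")
proof (cases "lambda_plus K P \<pi> < 1")
  case True
  have "msbm_prob K P \<pi> Q n A
      \<le> \<epsilon> + (\<Sum>k<K. \<Sum>C\<in>{C\<in>labelings n K. real (card (community n C k)) < real n * q / 2}.
              markov_weight P \<pi> n C)"
    using balanced by (intro msbm_prob_le_union[OF n Q \<epsilon>]) (simp add: not_less)
  also have "\<dots> \<le> \<epsilon> + (\<Sum>k<K. ?bound)"
    using q True by (intro add_left_mono sum_mono small_community_prob_le[OF K _ n]) auto
  also have "\<dots> \<le> \<epsilon> + 2 * real K * ?bound" by simp
  finally show ?thesis .
next
  case False
  then have "2 * A1 (lambda_plus K P \<pi>) + 4 * A2 (lambda_plus K P \<pi>) * q \<le> 0"
    using q by (intro A1_A2_nonpos) auto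
  then have "1 \<le> ?bound" by (simp add: divide_nonneg_nonpos)
  then have "1 * 1 \<le> 2 * real K * ?bound" using K by (intro mult_mono) auto
  then show ?thesis using msbm_prob_le_one[OF n Q, of A] \<epsilon> by linarith
qed

end

lemma Min_weighted_row_distance_ge:
  assumes K2: "K \<ge> 2" and sym: "\<forall>k<K. \<forall>l<K. Q0 k l = Q0 l k"
    and w: "\<forall>l<K. m \<le> w l" and m: "0 \<le> m"
  shows "m * \<alpha>\<^sup>2 * Dsq K Q0
    \<le> Min {(\<Sum>l<K. w l * (\<alpha> * Q0 k l - \<alpha> * Q0 j l)\<^sup>2) | k j. k < K \<and> j < K \<and> k \<noteq> j}"
    (is "_ \<le> Min ?S")
proof (subst Min_ge_iff)
  have "(\<Sum>l<K. w l * (\<alpha> * Q0 1 l - \<alpha> * Q0 0 l)\<^sup>2) \<in> ?S"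
    using K2 by (intro CollectI exI[of _ 1] exI[of _ 0]) simp
  then show "?S \<noteq> {}" by blast
  show "\<forall>a\<in>?S. m * \<alpha>\<^sup>2 * Dsq K Q0 \<le> a"
  proof (safe)
    fix k j assume kj: "k < K" "j < K" "k \<noteq> j"
    have "m * \<alpha>\<^sup>2 * Dsq K Q0 \<le> m * \<alpha>\<^sup>2 * (\<Sum>r<K. (Q0 r k - Q0 r j)\<^sup>2)"
      using Dsq_le[of k K j Q0] kj m by (intro mult_left_mono) auto
    also have "\<dots> = (\<Sum>l<K. m * (\<alpha> * Q0 k l - \<alpha> * Q0 j l)\<^sup>2)"
      using sym kj by (simp add: sum_distrib_left power_mult_distrib right_diff_distrib[symmetric]
          mult.assoc)
    also have "\<dots> \<le> (\<Sum>l<K. w l * (\<alpha> * Q0 k l - \<alpha> * Q0 j l)\<^sup>2)"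
      using w by (intro sum_mono mult_right_mono) auto
    finally show "m * \<alpha>\<^sup>2 * Dsq K Q0 \<le> (\<Sum>l<K. w l * (\<alpha> * Q0 k l - \<alpha> * Q0 j l)\<^sup>2)" .
  qed
qed (rule finite_image_pairs)

lemma GV_hypotheses_if_balanced:
  fixes q \<alpha> L D2 m c'' :: real
  assumes m: "real n * q / 2 \<le> m" and pos: "0 < q" "0 < \<alpha>" "0 < L" "0 < D2" "0 < n"
    and cond1: "\<alpha> * ln (real n) \<le> 1 / L" and ln_n: "0 < ln (real n)"
    and cond2: "real n * \<alpha> > 2 / (L * q)" "real n * \<alpha> > 4 * L * c'' / (q\<^sup>2 * D2)"
  shows "0 < m" "1 / m \<le> \<alpha> * L" "\<alpha> * L \<le> 1 / ln (real n)" "c'' * real n / m \<le> m * \<alpha> * D2 / L"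
proof -
  show m0: "0 < m" using m pos by (smt (verit) divide_pos_pos of_nat_0_less_iff mult_pos_pos)
  have "1 < \<alpha> * L * (real n * q / 2)" using cond2(1) pos by (simp add: divide_less_eq algebra_simps)
  also have "\<dots> \<le> \<alpha> * L * m" using m pos by (intro mult_left_mono) auto
  finally show "1 / m \<le> \<alpha> * L" using m0 by (simp add: divide_le_eq mult.commute)
  show "\<alpha> * L \<le> 1 / ln (real n)"
    using cond1 pos ln_n by (simp add: le_divide_eq mult.commute mult.left_commute)
  have "c'' * real n * L < (real n * q / 2)\<^sup>2 * \<alpha> * D2"
    using cond2(2) pos by (simp add: divide_less_eq power2_eq_square algebra_simps)
  also have "\<dots> \<le> m\<^sup>2 * \<alpha> * D2" using m pos by (intro mult_right_mono power_mono) auto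
  finally show "c'' * real n / m \<le> m * \<alpha> * D2 / L"
    using m0 pos by (simp add: field_simps power2_eq_square)
qed

text \<open>For balanced communities the separation \<open>s\<^sup>2\<close> of the guarantee is at least \<open>S\<^sup>2 / 2\<close>.\<close>
lemma GV_error_bound_balanced:
  fixes \<alpha> c c' c'' q :: real
  assumes K2: "K \<ge> 2" and Q0_range: "\<forall>k<K. \<forall>l<K. 0 \<le> Q0 k l \<and> Q0 k l \<le> 1"
    and Q0_sym: "\<forall>k<K. \<forall>l<K. Q0 k l = Q0 l k" and D_pos: "Dsq K Q0 > 0"
    and \<alpha>: "0 < \<alpha>" "\<alpha> < 1" and c': "c' > 0"
    and GV: "GV_guarantee alg n K \<alpha> Q0 (Lmax K Q0) c c' c''"
    and cond1: "\<alpha> * ln (real n) \<le> 1 / Lmax K Q0" and ln_n: "0 < ln (real n)"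
    and cond2: "real n * \<alpha> > 2 / (Lmax K Q0 * q)"
      "real n * \<alpha> > 4 * Lmax K Q0 * c'' / (q\<^sup>2 * Dsq K Q0)"
    and q: "0 < q" and C: "C \<in> labelings n K"
    and balanced: "\<forall>k<K. real n * q / 2 \<le> real (card (community n C k))"
  shows "sbm_prob (\<lambda>k l. \<alpha> * Q0 k l) n C
      (\<lambda>E. exp (- c' * (real n * \<alpha> * q * Dsq K Q0 / Lmax K Q0) / 2) < err n K (alg E) C)
    \<le> c / (real n)\<^sup>2"
proof -
  define L where "L = Lmax K Q0"
  define msz where "msz = (\<lambda>k. real (card (community n C k)))"
  define m where "m = Min (msz ` {..<K})"
  define s2 where "s2 = Min {(\<Sum>l<K. msz l * (\<alpha> * Q0 k l - \<alpha> * Q0 j l)\<^sup>2) | k j.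
    k < K \<and> j < K \<and> k \<noteq> j} / (\<alpha> * L)"
  have n: "0 < n" using ln_n by (cases n) auto
  have L: "0 < L" unfolding L_def using Lmax_pos[OF K2 _ D_pos] Q0_range by blast
  have m: "real n * q / 2 \<le> m"
    unfolding m_def msz_def using K2 balanced by (subst Min_ge_iff) (auto simp: lessThan_empty_iff)
  note hyps = GV_hypotheses_if_balanced[OF m q \<alpha>(1) L D_pos n cond1[folded L_def] ln_n
      cond2[folded L_def]]
  have "m * \<alpha> * Dsq K Q0 / L \<le> s2"
    using Min_weighted_row_distance_ge[OF K2 Q0_sym, of m msz \<alpha>] hyps(1) \<alpha> L
    unfolding s2_def m_def by (simp add: field_simps power2_eq_square)
  then have GV_C: "sbm_prob (\<lambda>k l. \<alpha> * Q0 k l) n C (\<lambda>E. exp (- c' * s2) < err n K (alg E) C)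
      \<le> c / (real n)\<^sup>2"
    using GV C hyps unfolding GV_guarantee_def Let_def msz_def m_def s2_def L_def by force
  have "real n * \<alpha> * q * Dsq K Q0 / L / 2 \<le> m * \<alpha> * Dsq K Q0 / L"
    using mult_right_mono[OF m, of "\<alpha> * Dsq K Q0 / L"] \<alpha> D_pos L by (simp add: field_simps)
  then have "real n * \<alpha> * q * Dsq K Q0 / L / 2 \<le> s2"
    using \<open>m * \<alpha> * Dsq K Q0 / L \<le> s2\<close> by linarith
  then have "c' * (real n * \<alpha> * q * Dsq K Q0 / L / 2) \<le> c' * s2"
    using c' by (intro mult_left_mono) auto
  then have "exp (- c' * s2) \<le> exp (- c' * (real n * \<alpha> * q * Dsq K Q0 / L) / 2)"
    by simp
  then have mono: "exp (- c' * s2) < err n K (alg E) C"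
    if "exp (- c' * (real n * \<alpha> * q * Dsq K Q0 / L) / 2) < err n K (alg E) C" for E
    using that by linarith
  have range: "\<forall>i<n. \<forall>j<n. 0 \<le> \<alpha> * Q0 (C i) (C j) \<and> \<alpha> * Q0 (C i) (C j) \<le> 1"
    using Q0_range \<alpha> C labelings_range by (auto intro: mult_le_one)
  have "sbm_prob (\<lambda>k l. \<alpha> * Q0 k l) n C
      (\<lambda>E. exp (- c' * (real n * \<alpha> * q * Dsq K Q0 / L) / 2) < err n K (alg E) C)
    \<le> sbm_prob (\<lambda>k l. \<alpha> * Q0 k l) n C (\<lambda>E. exp (- c' * s2) < err n K (alg E) C)"
    by (rule sbm_prob_mono[where Q = "\<lambda>k l. \<alpha> * Q0 k l" and n = n and C = C, OF range], rule mono)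
  with GV_C show ?thesis unfolding L_def[symmetric] by linarith
qed

theorem lemma1:
  fixes K n :: nat and P Q0 :: "nat \<Rightarrow> nat \<Rightarrow> real" and \<pi> :: "nat \<Rightarrow> real"
    and \<alpha> c c' c'' :: real and alg :: "(nat \<times> nat) set \<Rightarrow> nat \<Rightarrow> nat"
  assumes K2: "K \<ge> 2"
    and P_nonneg: "\<forall>i<K. \<forall>j<K. P i j \<ge> 0"
    and P_stoch: "\<forall>i<K. (\<Sum>j<K. P i j) = 1"
    and P_irred: "\<forall>i<K. \<forall>j<K. \<exists>m>0. mpow K P m i j > 0"
    and pi_pos: "\<forall>i<K. \<pi> i > 0"
    and pi_sum: "(\<Sum>i<K. \<pi> i) = 1"
    and pi_stat: "\<forall>j<K. (\<Sum>i<K. \<pi> i * P i j) = \<pi> j"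
    and Q0_range: "\<forall>k<K. \<forall>l<K. 0 \<le> Q0 k l \<and> Q0 k l \<le> 1"
    and Q0_sym: "\<forall>k<K. \<forall>l<K. Q0 k l = Q0 l k"
    and D_pos: "Dsq K Q0 > 0"
    and alpha: "0 < \<alpha>" "\<alpha> < 1"
    and c_pos: "c > 0" "c' > 0" "c'' > 0"
    and GV: "GV_guarantee alg n K \<alpha> Q0 (Lmax K Q0) c c' c''"
    and cond1: "\<alpha> * ln (real n) \<le> 1 / Lmax K Q0"
    and cond2: "real n * \<alpha> > max (4 * Lmax K Q0 * c'' / ((pi_min K \<pi>)^2 * Dsq K Q0))
                                  (2 / (Lmax K Q0 * pi_min K \<pi>))"
  shows "msbm_prob K P \<pi> (\<lambda>k l. \<alpha> * Q0 k l) n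
           (\<lambda>C E. err n K (alg E) C >
                  exp (- c' * (real n * \<alpha> * pi_min K \<pi> * Dsq K Q0 / Lmax K Q0) / 2))
         \<le> c / (real n)^2 + 2 * real K * exp (- real n * (pi_min K \<pi>)^2 /
              (2 * A1 (lambda_plus K P \<pi>) + 4 * A2 (lambda_plus K P \<pi>) * pi_min K \<pi>))"
proof -
  interpret stationary_chain K P \<pi>
    using P_nonneg P_stoch pi_pos pi_sum pi_stat by unfold_locales
  let ?q = "pi_min K \<pi>" and ?L = "Lmax K Q0"
  have K0: "K > 0" using K2 by simp
  have q: "0 < ?q" "?q \<le> 1/2" "\<forall>k<K. ?q \<le> \<pi> k"
    using pi_min_pos[OF K0 pi_pos] pi_min_le_half[OF K2 pi_sum] pi_min_le by auto
  have L: "0 < ?L" "?L \<le> 1"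
    using Lmax_pos[OF K2 _ D_pos] Lmax_le_one[OF K0] Q0_range by auto
  have "4 \<le> 2 / (?L * ?q)"
    using mult_mono[OF L(2) q(2)] L q by (simp add: field_simps)
  also have "\<dots> < real n * \<alpha>" using cond2 by simp
  also have "\<dots> \<le> real n" using alpha by (simp add: mult_left_le)
  finally have n: "n > 0" "0 < ln (real n)" by simp_all
  have Q: "\<forall>k<K. \<forall>l<K. 0 \<le> \<alpha> * Q0 k l \<and> \<alpha> * Q0 k l \<le> 1"
    using Q0_range alpha by (auto intro: mult_le_one)
  show ?thesis
    using GV_error_bound_balanced[OF K2 Q0_range Q0_sym D_pos alpha c_pos(2) GV cond1 n(2) _ _ q(1)]
      cond2 c_pos(1)
    by (intro msbm_prob_le_balanced[OF K0 n(1) q Q]) auto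
qed

end
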